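(* Suppose Assumptions A and C hold, and suppose that for every semidefinite face $\mathcal F$ of $\Gamma$, $$\dim(\mathcal V(\mathcal F))\ \ge\ \operatorname{affdim}(\{b(\gamma):\gamma\in\mathcal F\})+1.$$ Let $(\hat x,\hat t)\in\mathcal D_{\mathrm{SDP}}$ and suppose $\mathcal F(\hat x)$ is a semidefinite face of $\Gamma$. Then $(\hat x,\hat t)$ is a convex combination of finitely many points $(x_\alpha,t_\alpha)\in\mathcal D_{\mathrm{SDP}}$ with $\operatorname{affdim}(\mathcal F(x_\alpha))>\operatorname{affdim}(\mathcal F(\hat x))$ for each $\alpha$.
   Context: Fix integers $N\ge 1$, $m_I,m_E\ge 0$, $m:=m_I+m_E\ge 1$; $[a,b]=\{a,\dots,b\}$, $[n]=[1,n]$. For $i\in[0,m]$ let $q_i(x)=x^\top A_ix+2b_i^\top x+c_i$ with $A_i\in\mathbb S^N$, $b_i\in\mathbb R^N$, $c_i\in\mathbb R$. Let $Q_i=\begin{pmatrix}c_i& b_i^\top\\ b_i& A_i\end{pmatrix}$ and $\mathcal D_{\mathrm{SDP}}:=\{(x,t)\in\mathbb R^{N+1}:\exists X\in\mathbb S^N$ with $Y=\begin{pmatrix}1&x^\top\\ x& X\end{pmatrix}\succeq0$, $\langle Q_0,Y\rangle\le 2t$, $\langle Q_i,Y\rangle\le 0\ \forall i\in[m_I]$, $\langle Q_i,Y\rangle= 0\ \forall i\in[m_I+1,m]\}$. For $\gamma\in\mathbb R^m$: $A(\gamma)=A_0+\sum\gamma_iA_i$, $b(\gamma)=b_0+\sum\gamma_ib_i$,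 $q(\gamma,x)=q_0(x)+\sum\gamma_iq_i(x)$; $\Gamma:=\{\gamma: A(\gamma)\succeq0,\ \gamma_i\ge0\ \forall i\in[m_I]\}$. Assumption A: the QCQP feasible set $\{x:q_i(x)\le0\ \forall i\in[m_I],\ q_i(x)=0\ \forall i\in[m_I+1,m]\}$ is nonempty and some $\gamma^*$ with $\gamma^*_i\ge0$ ($i\in[m_I]$) has $A(\gamma^* )\succ0$. Assumption C: $\Gamma$ is a polyhedron. Under C, whenever $\sup_{\gamma\in\Gamma}q(\gamma,\hat x)$ is finite (e.g. for $(\hat x,\hat t)\in\mathcal D_{\mathrm{SDP}}$) it is attained and $\mathcal F(\hat x):=\arg\max_{\gamma\in\Gamma}q(\gamma,\hat x)$ is a nonempty face of $\Gamma$. A nonempty face $\mathcal F$ is definite if some $\gamma\in\mathcal F$ has $A(\gamma)\succ0$, semidefinite otherwise; $\mathcal V(\mathcal F):=\{v: A(\gamma)v=0\ \forall \gamma\in\mathcal F\}$. $\operatorname{affdim}$ is the dimension of the affine hull. *)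

theory Defs
  imports "HOL-Analysis.Analysis"
begin

text \<open>QCQP data: the objective index 0 is given separately (A0, b0, c0); the constraint
  indices [m] are the elements of a finite type 'm (so m = CARD('m) \<ge> 1); the
  inequality constraints are those indices in the set MI, the equality constraints
  are the remaining ones.  The dimension N = CARD('n).\<close>

definition psd :: "real^'k^'k \<Rightarrow> bool" where
  "psd M \<longleftrightarrow> (\<forall>v. 0 \<le> v \<bullet> (M *v v))"

definition pd :: "real^'k^'k \<Rightarrow> bool" where
  "pd M \<longleftrightarrow> (\<forall>v. v \<noteq> 0 \<longrightarrow> 0 < v \<bullet> (M *v v))"

definition symm :: "real^'k^'k \<Rightarrow> bool" where
  "symm M \<longleftrightarrow> transpose M = M"

definition frob :: "real^'k^'k \<Rightarrow> real^'k^'k \<Rightarrow> real" where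
  "frob P R = (\<Sum>i\<in>UNIV. \<Sum>j\<in>UNIV. P$i$j * R$i$j)"

text \<open>The bordered (N+1)x(N+1) matrix [[s, w^T],[w, M]], indexed by 'n option (None = index 0).\<close>
definition border :: "real \<Rightarrow> real^'n \<Rightarrow> real^'n^'n \<Rightarrow> real^('n option)^('n option)" where
  "border s w M = (\<chi> i j. case i of
      None \<Rightarrow> (case j of None \<Rightarrow> s | Some j' \<Rightarrow> w$j')
    | Some i' \<Rightarrow> (case j of None \<Rightarrow> w$i' | Some j' \<Rightarrow> M$i'$j'))"

definition qf :: "real^'n^'n \<Rightarrow> real^'n \<Rightarrow> real \<Rightarrow> real^'n \<Rightarrow> real" where
  "qf A b c x = x \<bullet> (A *v x) + 2 * (b \<bullet> x) + c"

definition D_SDP ::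
  "real^'n^'n \<Rightarrow> real^'n \<Rightarrow> real \<Rightarrow> ('m \<Rightarrow> real^'n^'n) \<Rightarrow> ('m \<Rightarrow> real^'n) \<Rightarrow> ('m \<Rightarrow> real)
   \<Rightarrow> 'm set \<Rightarrow> ((real^'n) \<times> real) set" where
  "D_SDP A0 b0 c0 A b c MI = {(x, t). \<exists>X. symm X \<and>
      (let Y = border 1 x X in psd Y \<and>
        frob (border c0 b0 A0) Y \<le> 2 * t \<and>
        (\<forall>i\<in>MI. frob (border (c i) (b i) (A i)) Y \<le> 0) \<and>
        (\<forall>i\<in>- MI. frob (border (c i) (b i) (A i)) Y = 0))}"

definition Agam :: "real^'n^'n \<Rightarrow> ('m::finite \<Rightarrow> real^'n^'n) \<Rightarrow> real^'m \<Rightarrow> real^'n^'n" where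
  "Agam A0 A \<gamma> = A0 + (\<Sum>i\<in>UNIV. \<gamma>$i *\<^sub>R A i)"

definition bgam :: "real^'n \<Rightarrow> ('m::finite \<Rightarrow> real^'n) \<Rightarrow> real^'m \<Rightarrow> real^'n" where
  "bgam b0 b \<gamma> = b0 + (\<Sum>i\<in>UNIV. \<gamma>$i *\<^sub>R b i)"

definition qgam ::
  "real^'n^'n \<Rightarrow> real^'n \<Rightarrow> real \<Rightarrow> ('m::finite \<Rightarrow> real^'n^'n) \<Rightarrow> ('m \<Rightarrow> real^'n) \<Rightarrow> ('m \<Rightarrow> real)
   \<Rightarrow> real^'m \<Rightarrow> real^'n \<Rightarrow> real" where
  "qgam A0 b0 c0 A b c \<gamma> x = qf A0 b0 c0 x + (\<Sum>i\<in>UNIV. \<gamma>$i * qf (A i) (b i) (c i) x)"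

definition Gamma :: "real^'n^'n \<Rightarrow> ('m::finite \<Rightarrow> real^'n^'n) \<Rightarrow> 'm set \<Rightarrow> (real^'m) set" where
  "Gamma A0 A MI = {\<gamma>. psd (Agam A0 A \<gamma>) \<and> (\<forall>i\<in>MI. 0 \<le> \<gamma>$i)}"

definition Fx ::
  "real^'n^'n \<Rightarrow> real^'n \<Rightarrow> real \<Rightarrow> ('m::finite \<Rightarrow> real^'n^'n) \<Rightarrow> ('m \<Rightarrow> real^'n) \<Rightarrow> ('m \<Rightarrow> real)
   \<Rightarrow> 'm set \<Rightarrow> real^'n \<Rightarrow> (real^'m) set" where
  "Fx A0 b0 c0 A b c MI x = {\<gamma> \<in> Gamma A0 A MI.
      \<forall>\<gamma>'\<in>Gamma A0 A MI. qgam A0 b0 c0 A b c \<gamma>' x \<le> qgam A0 b0 c0 A b c \<gamma> x}"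

definition semidef_face :: "real^'n^'n \<Rightarrow> ('m::finite \<Rightarrow> real^'n^'n) \<Rightarrow> 'm set \<Rightarrow> (real^'m) set \<Rightarrow> bool" where
  "semidef_face A0 A MI F \<longleftrightarrow> F face_of Gamma A0 A MI \<and> F \<noteq> {} \<and> \<not> (\<exists>\<gamma>\<in>F. pd (Agam A0 A \<gamma>))"

definition Vker :: "real^'n^'n \<Rightarrow> ('m::finite \<Rightarrow> real^'n^'n) \<Rightarrow> (real^'m) set \<Rightarrow> (real^'n) set" where
  "Vker A0 A F = {v. \<forall>\<gamma>\<in>F. Agam A0 A \<gamma> *v v = 0}"

end

theory Submission
  imports Defs
begin

text \<open>Since \<open>F = F(xh)\<close> is semidefinite, the dimension condition yields \<open>v \<noteq> 0\<close> in the common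
  kernel \<open>V(F)\<close> with \<open>b(\<gamma>)\<^sup>T v = \<beta>\<close> for all \<open>\<gamma> \<in> F\<close>.  Along the line
  \<open>s \<mapsto> (xh + s v, th + s \<beta>)\<close> every multiplier in \<open>F\<close> keeps \<open>q(\<gamma>, \<cdot>)\<close> equal to the moving bound,
  so by Lagrangian duality (weak duality, and strong duality under Slater's condition) the line
  stays in \<open>D\<^sub>S\<^sub>D\<^sub>P\<close> exactly as long as no other multiplier of \<open>\<Gamma>\<close> overtakes them.  This happens on
  a compact interval of steps; an error bound on the polyhedron \<open>\<Gamma>\<close>, obtained from Farkas' lemma,
  shows that a step is interior whenever the maximising face is still \<open>F\<close>.  Hence at both
  endpoints the maximising face strictly contains \<open>F\<close>, so it has larger affine dimension, and
  \<open>(xh, th)\<close> lies on the segment between them.\<close>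

definition outer :: "real^'n \<Rightarrow> real^'n \<Rightarrow> real^'n^'n" where
  "outer u w = (\<chi> i j. u$i * w$j)"

lemma symm_iff: "symm M \<longleftrightarrow> (\<forall>i j. M$i$j = M$j$i)"
  unfolding symm_def transpose_def by (auto simp: vec_eq_iff)

lemma symm_inner: "symm P \<Longrightarrow> (P *v u) \<bullet> w = u \<bullet> (P *v w)"
  by (metis dot_lmul_matrix symm_def vector_transpose_matrix)

lemma symm_outer: "symm (outer u u)"
  by (simp add: symm_iff outer_def mult.commute)

lemma outer_mult_vec: "outer u u *v w = (u \<bullet> w) *\<^sub>R u"
  by (simp add: outer_def matrix_vector_mult_def vec_eq_iff inner_vec_def sum_distrib_left
      mult.commute mult.left_commute)

lemma inner_outer_mult_vec: "w \<bullet> (outer u u *v w) = (u \<bullet> w)\<^sup>2"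
  by (simp add: outer_mult_vec power2_eq_square inner_commute)

lemma frob_outer: "frob P (outer u u) = u \<bullet> (P *v u)"
  by (simp add: frob_def outer_def inner_vec_def matrix_vector_mult_def sum_distrib_left
      mult.commute mult.left_commute)

lemma frob_commute: "frob P Q = frob Q P"
  by (simp add: frob_def mult.commute)

lemma frob_add_right: "frob P (Q + R) = frob P Q + frob P R"
  by (simp add: frob_def algebra_simps sum.distrib)

lemma frob_diff_left: "frob (P - Q) R = frob P R - frob Q R"
  by (simp add: frob_def algebra_simps sum_subtractf)

lemma frob_scaleR_left: "frob (r *\<^sub>R P) Q = r * frob P Q"
  by (simp add: frob_def sum_distrib_left mult.assoc)

lemma psd_add: "psd P \<Longrightarrow> psd Q \<Longrightarrow> psd (P + Q)"
  by (simp add: psd_def matrix_vector_mult_add_rdistrib inner_add_right)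

lemma psd_scaleR: "psd P \<Longrightarrow> 0 \<le> r \<Longrightarrow> psd (r *\<^sub>R P)"
  by (simp add: psd_def scaleR_matrix_vector_assoc[symmetric])

lemma psd_outer: "psd (outer u u)"
  by (simp add: psd_def inner_outer_mult_vec)

lemma pd_imp_psd: "pd P \<Longrightarrow> psd P"
  unfolding pd_def psd_def by (metis inner_zero_left order.refl less_imp_le)

lemma frob_zero_left [simp]: "frob 0 Q = 0"
  by (simp add: frob_def)

lemma frob_zero_right [simp]: "frob P 0 = 0"
  by (simp add: frob_def)

lemma frob_add_left: "frob (P + Q) R = frob P R + frob Q R"
  by (simp add: frob_def algebra_simps sum.distrib)

lemma frob_sum_left: "frob (\<Sum>i\<in>I. f i) R = (\<Sum>i\<in>I. frob (f i) R)"
  by (induction I rule: infinite_finite_induct) (simp_all add: frob_add_left)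

lemma symm_zero [simp]: "symm 0"
  by (simp add: symm_iff)

lemma symm_add: "symm P \<Longrightarrow> symm Q \<Longrightarrow> symm (P + Q)"
  by (simp add: symm_iff)

lemma symm_scaleR: "symm P \<Longrightarrow> symm (r *\<^sub>R P)"
  by (simp add: symm_iff)

lemma symm_sum: "(\<And>i. i \<in> I \<Longrightarrow> symm (f i)) \<Longrightarrow> symm (\<Sum>i\<in>I. f i)"
  by (induction I rule: infinite_finite_induct) (simp_all add: symm_add)

lemma sum_matrix_vector_mult: "(\<Sum>i\<in>I. f i) *v y = (\<Sum>i\<in>I. f i *v y)"
  by (induction I rule: infinite_finite_induct) (simp_all add: matrix_vector_mult_add_rdistrib)

lemma uminus_matrix_vector_mult: "(- M) *v w = - (M *v (w::real^'n))"
  by (simp add: matrix_vector_mult_def vec_eq_iff sum_negf)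

lemma quadratic_form_le_of_sphere:
  fixes P :: "real^'n^'n"
  assumes "\<And>u. u \<in> sphere 0 1 \<Longrightarrow> u \<bullet> (P *v u) \<le> l"
  shows "w \<bullet> (P *v w) \<le> l * (w \<bullet> w)"
proof (cases "w = 0")
  case False
  have "(1 / norm w) *\<^sub>R w \<in> sphere 0 1" using False by simp
  hence "((1 / norm w) *\<^sub>R w) \<bullet> (P *v ((1 / norm w) *\<^sub>R w)) \<le> l" by (rule assms)
  hence "(w \<bullet> (P *v w)) / (norm w)\<^sup>2 \<le> l"
    by (simp add: matrix_vector_mult_scaleR power2_eq_square)
  thus ?thesis using False by (simp add: divide_le_eq dot_square_norm)
qed simp

lemma quadratic_form_ge_of_sphere:
  fixes M :: "real^'n^'n"
  assumes "\<And>u. u \<in> sphere 0 1 \<Longrightarrow> l \<le> u \<bullet> (M *v u)"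
  shows "l * (w \<bullet> w) \<le> w \<bullet> (M *v w)"
  using quadratic_form_le_of_sphere[of "- M" "- l" w] assms
  by (simp add: uminus_matrix_vector_mult)

lemma pd_add_small:
  fixes P Q :: "real^'n^'n"
  assumes "pd P"
  shows "\<exists>\<delta>>0. pd (P + \<delta> *\<^sub>R Q)"
proof -
  have ne: "sphere (0::real^'n) 1 \<noteq> {}" by simp
  have "continuous_on (sphere 0 1) (\<lambda>u::real^'n. u \<bullet> (P *v u))"
    by (intro continuous_intros matrix_vector_mult_linear_continuous_on)
  from continuous_attains_inf[OF compact_sphere ne this] obtain u0 where
    u0: "u0 \<in> sphere 0 1" "\<forall>u\<in>sphere 0 1. u0 \<bullet> (P *v u0) \<le> u \<bullet> (P *v u)"
    by blast
  have "continuous_on (sphere 0 1) (\<lambda>u::real^'n. \<bar>u \<bullet> (Q *v u)\<bar>)"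
    by (intro continuous_intros matrix_vector_mult_linear_continuous_on)
  from continuous_attains_sup[OF compact_sphere ne this] obtain u1 where
    u1: "\<forall>u\<in>sphere 0 1. \<bar>u \<bullet> (Q *v u)\<bar> \<le> \<bar>u1 \<bullet> (Q *v u1)\<bar>"
    by blast
  define \<mu> where "\<mu> = u0 \<bullet> (P *v u0)"
  define B where "B = \<bar>u1 \<bullet> (Q *v u1)\<bar>"
  have "u0 \<noteq> 0" using u0(1) by auto
  hence "\<mu> > 0" using assms by (simp add: pd_def \<mu>_def)
  define \<delta> where "\<delta> = \<mu> / (2 * (B + 1))"
  have "\<delta> > 0" "\<delta> * B \<le> \<mu> / 2"
    using \<open>\<mu> > 0\<close> by (auto simp: \<delta>_def B_def field_simps)
  have "\<mu> / 2 \<le> u \<bullet> ((P + \<delta> *\<^sub>R Q) *v u)" if "u \<in> sphere 0 1" for u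
  proof -
    have "- (\<delta> * B) \<le> \<delta> * (u \<bullet> (Q *v u))"
      using u1 that \<open>\<delta> > 0\<close> unfolding B_def by (smt (verit) abs_le_D2 mult_left_mono mult_minus_right)
    moreover have "\<mu> \<le> u \<bullet> (P *v u)" using u0(2) that by (simp add: \<mu>_def)
    ultimately show ?thesis using \<open>\<delta> * B \<le> \<mu> / 2\<close>
      by (simp add: matrix_vector_mult_add_rdistrib inner_add_right
          scaleR_matrix_vector_assoc[symmetric])
  qed
  hence "\<mu> / 2 * (v \<bullet> v) \<le> v \<bullet> ((P + \<delta> *\<^sub>R Q) *v v)" for v
    by (rule quadratic_form_ge_of_sphere)
  hence "pd (P + \<delta> *\<^sub>R Q)"
    unfolding pd_def using \<open>\<mu> > 0\<close> by (meson inner_gt_zero_iff half_gt_zero mult_pos_pos order_less_le_trans)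
  thus ?thesis using \<open>\<delta> > 0\<close> by blast
qed

section \<open>Frobenius product of semidefinite matrices\<close>

lemma symm_quadratic_form_zero_imp_zero:
  assumes "symm P" and "\<And>w. w \<bullet> (P *v w) = 0"
  shows "P *v w = 0"
proof -
  have "(w + P *v w) \<bullet> (P *v (w + P *v w)) = 0" by (rule assms(2))
  moreover have "w \<bullet> (P *v (P *v w)) = (P *v w) \<bullet> (P *v w)"
    using symm_inner[OF assms(1), of w "P *v w"] by simp
  ultimately have "2 * ((P *v w) \<bullet> (P *v w)) = 0"
    using assms(2)[of w] assms(2)[of "P *v w"]
    by (simp add: matrix_vector_right_distrib inner_add_left inner_add_right)
  thus ?thesis by simp
qed

lemma eq_0_if_quadratic_perturbation_nonpos:
  fixes a c :: real
  assumes "\<And>e. e > 0 \<Longrightarrow> 2 * e * a + e\<^sup>2 * c \<le> 0" and "a \<ge> 0"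
  shows "a = 0"
proof (rule ccontr)
  assume "a \<noteq> 0"
  hence a: "a > 0" using assms(2) by simp
  define e where "e = a / (\<bar>c\<bar> + 1)"
  have e: "e > 0" using a by (simp add: e_def)
  have "e * \<bar>c\<bar> < a" using a by (simp add: e_def field_simps)
  hence "0 < e * (2 * a + e * c)" using e by (smt (verit) abs_ge_minus_self mult_pos_pos mult_minus_right)
  also have "\<dots> = 2 * e * a + e\<^sup>2 * c" by (simp add: power2_eq_square algebra_simps)
  finally show False using assms(1)[OF e] by simp
qed

text \<open>A maximiser of the Rayleigh quotient is an eigenvector: moving from \<open>v\<close> in the direction
  of the residual \<open>P v - l v\<close> would otherwise increase the quotient to first order.\<close>

lemma rayleigh_maximizer_eigenvector:
  fixes P :: "real^'n^'n"
  assumes sP: "symm P" and v: "norm v = 1"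
    and vmax: "\<And>u. u \<in> sphere 0 1 \<Longrightarrow> u \<bullet> (P *v u) \<le> v \<bullet> (P *v v)"
  shows "P *v v = (v \<bullet> (P *v v)) *\<^sub>R v"
proof -
  define l where "l = v \<bullet> (P *v v)"
  have vv: "v \<bullet> v = 1" using v by (simp add: dot_square_norm)
  have bound: "w \<bullet> (P *v w) \<le> l * (w \<bullet> w)" for w
    using quadratic_form_le_of_sphere vmax l_def by blast
  define r where "r = P *v v - l *\<^sub>R v"
  have vr: "v \<bullet> r = 0" by (simp add: r_def l_def inner_diff_right vv)
  have rPv: "r \<bullet> (P *v v) = r \<bullet> r" and vPr: "v \<bullet> (P *v r) = r \<bullet> r"
    using vr symm_inner[OF sP, of v r] by (simp_all add: r_def inner_diff_right inner_commute)
  have "r \<bullet> r = 0"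
  proof (rule eq_0_if_quadratic_perturbation_nonpos)
    fix e :: real assume "e > 0"
    have "l + 2 * e * (r \<bullet> r) + e\<^sup>2 * (r \<bullet> (P *v r))
        = (v + e *\<^sub>R r) \<bullet> (P *v (v + e *\<^sub>R r))"
      using rPv vPr by (simp add: matrix_vector_right_distrib matrix_vector_mult_scaleR
          inner_add_left inner_add_right l_def power2_eq_square algebra_simps)
    also have "\<dots> \<le> l * ((v + e *\<^sub>R r) \<bullet> (v + e *\<^sub>R r))" by (rule bound)
    also have "\<dots> = l * (1 + e\<^sup>2 * (r \<bullet> r))"
      using vr vv by (simp add: inner_add_left inner_add_right inner_commute power2_eq_square)
    finally show "2 * e * (r \<bullet> r) + e\<^sup>2 * (r \<bullet> (P *v r) - l * (r \<bullet> r)) \<le> 0"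
      by (simp add: algebra_simps)
  qed simp
  thus ?thesis by (simp add: r_def l_def)
qed

lemma psd_remove_eigenvector:
  fixes P :: "real^'n^'n"
  assumes sP: "symm P" and pP: "psd P" and v: "norm v = 1" and eig: "P *v v = l *\<^sub>R v"
  shows "psd (P - l *\<^sub>R outer v v)"
  unfolding psd_def
proof
  fix w
  define a where "a = v \<bullet> w"
  define u where "u = w - a *\<^sub>R v"
  have vv: "v \<bullet> v = 1" using v by (simp add: dot_square_norm)
  have uv: "v \<bullet> u = 0" by (simp add: u_def a_def inner_diff_right vv)
  have Puv: "v \<bullet> (P *v u) = 0" and Pvu: "u \<bullet> (P *v v) = 0"
    using symm_inner[OF sP, of v u] eig uv by (simp_all add: inner_commute)
  have "w \<bullet> ((P - l *\<^sub>R outer v v) *v w) = w \<bullet> (P *v w) - l * a * a"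
    by (simp add: matrix_vector_mult_diff_rdistrib scaleR_matrix_vector_assoc[symmetric]
        outer_mult_vec a_def inner_diff_right inner_commute[of w v])
  also have "w \<bullet> (P *v w) = u \<bullet> (P *v u) + a * a * l"
    unfolding u_def using Puv Pvu eig vv
    by (simp add: u_def matrix_vector_mult_diff_distrib matrix_vector_mult_scaleR inner_diff_left
        inner_diff_right algebra_simps inner_commute)
  finally show "0 \<le> w \<bullet> ((P - l *\<^sub>R outer v v) *v w)" using pP psd_def by auto
qed

lemma kernel_psubset_remove_eigenvector:
  fixes P :: "real^'n^'n"
  assumes sP: "symm P" and v: "norm v = 1" and eig: "P *v v = l *\<^sub>R v" and l: "l \<noteq> 0"
  shows "{w. P *v w = 0} \<subset> {w. (P - l *\<^sub>R outer v v) *v w = 0}"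
proof -
  have vv: "v \<bullet> v = 1" using v by (simp add: dot_square_norm)
  have mult_eq: "(P - l *\<^sub>R outer v v) *v w = P *v w - (l * (v \<bullet> w)) *\<^sub>R v" for w
    by (simp add: matrix_vector_mult_diff_rdistrib scaleR_matrix_vector_assoc[symmetric] outer_mult_vec)
  have "v \<bullet> w = 0" if "P *v w = 0" for w
  proof -
    have "l * (v \<bullet> w) = v \<bullet> (P *v w)" using eig symm_inner[OF sP, of v w] by simp
    thus ?thesis using that l by simp
  qed
  hence "{w. P *v w = 0} \<subseteq> {w. (P - l *\<^sub>R outer v v) *v w = 0}" by (auto simp: mult_eq)
  moreover have "v \<in> {w. (P - l *\<^sub>R outer v v) *v w = 0} - {w. P *v w = 0}"
    using eig vv l v by (auto simp: mult_eq)
  ultimately show ?thesis by blast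
qed

lemma psd_positive_eigenvector:
  fixes P :: "real^'n^'n"
  assumes sP: "symm P" and pP: "psd P" and "P \<noteq> 0"
  obtains v l where "norm v = 1" "l > 0" "P *v v = l *\<^sub>R v"
proof -
  have ne: "sphere (0::real^'n) 1 \<noteq> {}" by simp
  have "continuous_on (sphere 0 1) (\<lambda>u::real^'n. u \<bullet> (P *v u))"
    by (intro continuous_intros matrix_vector_mult_linear_continuous_on)
  from continuous_attains_sup[OF compact_sphere ne this] obtain v where v: "v \<in> sphere 0 1"
    and vmax: "\<And>u. u \<in> sphere 0 1 \<Longrightarrow> u \<bullet> (P *v u) \<le> v \<bullet> (P *v v)"
    by blast
  define l where "l = v \<bullet> (P *v v)"
  have eig: "P *v v = l *\<^sub>R v" unfolding l_def
    by (rule rayleigh_maximizer_eigenvector[OF sP _ vmax]) (use v in auto)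
  have "l > 0"
  proof (rule ccontr)
    assume "\<not> l > 0"
    hence "w \<bullet> (P *v w) \<le> 0" for w
      using quadratic_form_le_of_sphere[of P l w] vmax l_def
      by (smt (verit) inner_ge_zero mult_nonpos_nonneg)
    hence "w \<bullet> (P *v w) = 0" for w using pP by (simp add: psd_def order_antisym)
    hence "P *v w = 0" for w using symm_quadratic_form_zero_imp_zero[OF sP] by blast
    thus False using \<open>P \<noteq> 0\<close> by (simp add: matrix_eq)
  qed
  thus thesis using that v eig by simp
qed

text \<open>Induction on the rank: removing the top eigencomponent \<open>l v v\<^sup>T\<close> keeps \<open>P\<close> positive
  semidefinite and strictly enlarges its kernel.\<close>

lemma frob_psd_nonneg:
  fixes P Z :: "real^'n^'n"
  assumes "symm P" "psd P" "psd Z"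
  shows "0 \<le> frob P Z"
  using assms(1,2)
proof (induction "CARD('n) - dim {w. P *v w = 0}" arbitrary: P rule: less_induct)
  case less
  note sP = less.prems(1) and pP = less.prems(2)
  show ?case
  proof (cases "P = 0")
    case False
    obtain v l where v: "norm v = 1" and "l > 0" and eig: "P *v v = l *\<^sub>R v"
      using psd_positive_eigenvector[OF sP pP False] by blast
    define P' where "P' = P - l *\<^sub>R outer v v"
    have "span {w. P *v w = 0} \<subset> span {w. P' *v w = 0}"
      using kernel_psubset_remove_eigenvector[OF sP v eig] \<open>l > 0\<close>
      by (simp add: P'_def span_eq_iff[THEN iffD2, OF linear_subspace_kernel[OF matrix_vector_mul_linear]])
    hence "dim {w. P *v w = 0} < dim {w. P' *v w = 0}" by (rule dim_psubset)
    hence "CARD('n) - dim {w. P' *v w = 0} < CARD('n) - dim {w. P *v w = 0}"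
      using dim_subset_UNIV_cart[of "{w. P' *v w = 0}"] by linarith
    moreover have "symm P'" using sP by (simp add: P'_def symm_iff outer_def mult.commute)
    moreover have "psd P'"
      unfolding P'_def by (rule psd_remove_eigenvector[OF sP pP v eig])
    ultimately have "0 \<le> frob P' Z" by (rule less.hyps)
    moreover have "frob P Z = frob P' Z + l * frob (outer v v) Z"
      by (simp add: P'_def frob_diff_left frob_scaleR_left)
    moreover have "0 \<le> frob (outer v v) Z"
      using assms(3) by (metis frob_commute frob_outer psd_def)
    ultimately show ?thesis using \<open>l > 0\<close> by simp
  qed (simp add: frob_def)
qed

section \<open>Moment matrices\<close>

lemma sum_UNIV_option:
  "(\<Sum>i\<in>(UNIV::'a::finite option set). f i) = f None + (\<Sum>i\<in>UNIV. f (Some i))"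
  by (simp add: UNIV_option_conv sum.reindex)

lemma inner_option_vec:
  fixes u w :: "real^('m::finite option)"
  shows "u \<bullet> w = u$None * w$None + (\<Sum>i\<in>UNIV. u$Some i * w$Some i)"
  by (simp add: inner_vec_def sum_UNIV_option)

lemma frob_border:
  "frob (border c w M) (border 1 x X) = c + 2 * (w \<bullet> x) + frob M X"
  by (simp add: frob_def border_def sum_UNIV_option sum.distrib inner_vec_def)

lemma quadratic_form_border:
  fixes y :: "real^('n::finite option)"
  defines "u \<equiv> \<chi> i. y $ Some i"
  shows "y \<bullet> (border s w M *v y) = s * (y$None)\<^sup>2 + 2 * y$None * (w \<bullet> u) + u \<bullet> (M *v u)"
proof -
  have "(border s w M *v y) $ None = s * y$None + w \<bullet> u"
    by (simp add: matrix_vector_mult_def sum_UNIV_option border_def u_def inner_vec_def)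
  moreover have "(border s w M *v y) $ Some i = w$i * y$None + (M *v u)$i" for i
    by (simp add: matrix_vector_mult_def sum_UNIV_option border_def u_def)
  ultimately show ?thesis
    by (simp add: inner_option_vec u_def inner_vec_def[of w] inner_vec_def[of "\<chi> i. y $ Some i"]
        distrib_left sum.distrib sum_distrib_left power2_eq_square algebra_simps)
qed

lemma psd_border_iff:
  fixes x :: "real^'n::finite"
  shows "psd (border 1 x X) \<longleftrightarrow> psd (X - outer x x)"
proof
  assume psdY: "psd (border 1 x X)"
  show "psd (X - outer x x)" unfolding psd_def
  proof
    fix u :: "real^'n"
    define y :: "real^('n option)" where "y = (\<chi> i. case i of None \<Rightarrow> - (x \<bullet> u) | Some j \<Rightarrow> u$j)"
    have "(\<chi> i. y $ Some i) = u" by (simp add: y_def vec_eq_iff)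
    hence "y \<bullet> (border 1 x X *v y) = u \<bullet> ((X - outer x x) *v u)"
      using quadratic_form_border[of y 1 x X]
      by (simp add: y_def power2_eq_square matrix_vector_mult_diff_rdistrib inner_diff_right
          inner_outer_mult_vec)
    thus "0 \<le> u \<bullet> ((X - outer x x) *v u)" using psdY psd_def by metis
  qed
next
  assume psdZ: "psd (X - outer x x)"
  show "psd (border 1 x X)" unfolding psd_def
  proof
    fix y :: "real^('n option)"
    define u where "u = (\<chi> i. y $ Some i)"
    have "y \<bullet> (border 1 x X *v y) = (y$None + x \<bullet> u)\<^sup>2 + u \<bullet> ((X - outer x x) *v u)"
      using quadratic_form_border[of y 1 x X]
      by (simp add: u_def matrix_vector_mult_diff_rdistrib inner_diff_right inner_outer_mult_vec
          power2_eq_square algebra_simps)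
    thus "0 \<le> y \<bullet> (border 1 x X *v y)" using psdZ psd_def by (metis add_nonneg_nonneg zero_le_power2)
  qed
qed

text \<open>Writing \<open>X = x x\<^sup>T + Z\<close>, each lifted constraint becomes \<open>q\<^sub>i(x) + \<langle>A\<^sub>i, Z\<rangle>\<close>.\<close>

lemma D_SDP_iff:
  fixes x :: "real^'n::finite"
  shows "(x, t) \<in> D_SDP A0 b0 c0 A b c MI \<longleftrightarrow>
    (\<exists>Z. symm Z \<and> psd Z \<and> qf A0 b0 c0 x + frob A0 Z \<le> 2 * t
      \<and> (\<forall>i\<in>MI. qf (A i) (b i) (c i) x + frob (A i) Z \<le> 0)
      \<and> (\<forall>i\<in>- MI. qf (A i) (b i) (c i) x + frob (A i) Z = 0))"
proof -
  have lift: "frob (border c' w M) (border 1 x (outer x x + Z)) = qf M w c' x + frob M Z"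
    for c' w M and Z :: "real^'n^'n"
    by (simp add: frob_border frob_add_right frob_outer qf_def)
  have symm_lift: "symm (outer x x + Z) \<longleftrightarrow> symm Z" for Z
    using symm_outer[of x] by (auto simp: symm_iff)
  show ?thesis
  proof
    assume "(x, t) \<in> D_SDP A0 b0 c0 A b c MI"
    then obtain X where "symm X" "psd (border 1 x X)"
      "frob (border c0 b0 A0) (border 1 x X) \<le> 2 * t"
      "\<forall>i\<in>MI. frob (border (c i) (b i) (A i)) (border 1 x X) \<le> 0"
      "\<forall>i\<in>- MI. frob (border (c i) (b i) (A i)) (border 1 x X) = 0"
      unfolding D_SDP_def Let_def by blast
    moreover have "X = outer x x + (X - outer x x)" by simp
    ultimately show "\<exists>Z. symm Z \<and> psd Z \<and> qf A0 b0 c0 x + frob A0 Z \<le> 2 * t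
      \<and> (\<forall>i\<in>MI. qf (A i) (b i) (c i) x + frob (A i) Z \<le> 0)
      \<and> (\<forall>i\<in>- MI. qf (A i) (b i) (c i) x + frob (A i) Z = 0)"
      by (metis lift symm_lift psd_border_iff)
  next
    assume "\<exists>Z. symm Z \<and> psd Z \<and> qf A0 b0 c0 x + frob A0 Z \<le> 2 * t
      \<and> (\<forall>i\<in>MI. qf (A i) (b i) (c i) x + frob (A i) Z \<le> 0)
      \<and> (\<forall>i\<in>- MI. qf (A i) (b i) (c i) x + frob (A i) Z = 0)"
    then obtain Z where "symm Z" "psd Z" "qf A0 b0 c0 x + frob A0 Z \<le> 2 * t"
      "\<forall>i\<in>MI. qf (A i) (b i) (c i) x + frob (A i) Z \<le> 0"
      "\<forall>i\<in>- MI. qf (A i) (b i) (c i) x + frob (A i) Z = 0" by blast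
    thus "(x, t) \<in> D_SDP A0 b0 c0 A b c MI"
      unfolding D_SDP_def Let_def mem_Collect_eq prod.case
      by (intro exI[of _ "outer x x + Z"]) (simp add: lift symm_lift psd_border_iff)
  qed
qed

lemma inner_Agam:
  "z \<bullet> (Agam A0 A \<gamma> *v y) = z \<bullet> (A0 *v y) + (\<Sum>k\<in>UNIV. \<gamma>$k * (z \<bullet> (A k *v y)))"
  by (simp add: Agam_def matrix_vector_mult_add_rdistrib sum_matrix_vector_mult inner_add_right
      inner_sum_right scaleR_matrix_vector_assoc[symmetric])

lemma inner_bgam: "bgam b0 b \<gamma> \<bullet> y = b0 \<bullet> y + (\<Sum>k\<in>UNIV. \<gamma>$k * (b k \<bullet> y))"
  by (simp add: bgam_def inner_add_left inner_sum_left)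

lemma frob_Agam: "frob (Agam A0 A \<gamma>) Z = frob A0 Z + (\<Sum>k\<in>UNIV. \<gamma>$k * frob (A k) Z)"
  by (simp add: Agam_def frob_add_left frob_sum_left frob_scaleR_left)

lemma subspace_Vker: "subspace (Vker A0 A F)"
  unfolding Vker_def subspace_def by (simp add: matrix_vector_right_distrib matrix_vector_mult_scaleR)

lemma qf_along_line:
  assumes "symm M"
  shows "qf M w c' (x + s *\<^sub>R v) = qf M w c' x + 2 * s * ((M *v x + w) \<bullet> v) + s\<^sup>2 * (v \<bullet> (M *v v))"
proof -
  have "x \<bullet> (M *v v) = (M *v x) \<bullet> v" "v \<bullet> (M *v x) = (M *v x) \<bullet> v"
    using symm_inner[OF assms, of x v] by (simp_all add: inner_commute)
  thus ?thesis
    by (simp add: qf_def matrix_vector_right_distrib matrix_vector_mult_scaleR inner_add_left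
      inner_add_right power2_eq_square algebra_simps inner_commute[of v w])
qed

lemma abs_le_of_quadratic_nonpos:
  fixes a b c s :: real
  assumes a: "a > 0" and le: "c + s * b + s\<^sup>2 * a \<le> 0"
  shows "\<bar>s\<bar> \<le> (\<bar>b\<bar> + \<bar>c\<bar>) / a + 1"
proof (cases "\<bar>s\<bar> \<le> 1")
  case True
  have "0 \<le> (\<bar>b\<bar> + \<bar>c\<bar>) / a" using a by simp
  thus ?thesis using True by linarith
next
  case False
  have "a * \<bar>s\<bar> * \<bar>s\<bar> = s\<^sup>2 * a" by (simp add: power2_eq_square abs_mult_self_eq)
  also have "\<dots> \<le> \<bar>c\<bar> + \<bar>s\<bar> * \<bar>b\<bar>"
    using le abs_ge_minus_self[of c] abs_ge_minus_self[of "s * b"] by (simp add: abs_mult)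
  also have "\<dots> \<le> (\<bar>b\<bar> + \<bar>c\<bar>) * \<bar>s\<bar>"
    using False mult_left_mono[of 1 "\<bar>s\<bar>" "\<bar>c\<bar>"] by (simp add: algebra_simps)
  finally have "a * \<bar>s\<bar> \<le> \<bar>b\<bar> + \<bar>c\<bar>"
    using False by (meson mult_le_cancel_right_pos less_trans zero_less_one not_le)
  hence "\<bar>s\<bar> \<le> (\<bar>b\<bar> + \<bar>c\<bar>) / a" using a by (simp add: le_divide_eq mult.commute)
  thus ?thesis by simp
qed

lemma sum_affine_combination:
  fixes \<gamma> d :: "real^'m::finite"
  assumes "\<kappa> = l + a" "\<kappa> \<noteq> 0"
  shows "\<kappa> * (f0 + (\<Sum>k\<in>UNIV. ((1 / \<kappa>) *\<^sub>R (l *\<^sub>R \<gamma> + d))$k * g k))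
    = l * (f0 + (\<Sum>k\<in>UNIV. \<gamma>$k * g k)) + (a * f0 + (\<Sum>k\<in>UNIV. d$k * g k))"
proof -
  have "\<kappa> * (\<Sum>k\<in>UNIV. ((1 / \<kappa>) *\<^sub>R (l *\<^sub>R \<gamma> + d))$k * g k)
      = (\<Sum>k\<in>UNIV. (l * \<gamma>$k + d$k) * g k)"
    using assms(2) by (simp add: sum_distrib_left)
  thus ?thesis using assms(1)
    by (simp add: distrib_left distrib_right sum.distrib sum_distrib_left mult.assoc)
qed

section \<open>Cones, Farkas' lemma and polyhedra\<close>

lemma separating_hyperplane_closed_cone:
  fixes K :: "'a::euclidean_space set"
  assumes "convex_cone K" "closed K" "p \<notin> K"
  shows "\<exists>a. a \<bullet> p < 0 \<and> (\<forall>y\<in>K. 0 \<le> a \<bullet> y)"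
proof -
  have "convex K" using assms(1) by (simp add: convex_cone_def)
  then obtain a d where sep: "a \<bullet> p < d" "\<forall>y\<in>K. d < a \<bullet> y"
    using separating_hyperplane_closed_point assms(2,3) by blast
  have "d < 0" using sep(2) convex_cone_contains_0[OF assms(1)] by force
  moreover have "0 \<le> a \<bullet> y" if "y \<in> K" for y
  proof (rule ccontr)
    assume "\<not> 0 \<le> a \<bullet> y"
    hence "(d / (a \<bullet> y)) *\<^sub>R y \<in> K"
      using \<open>d < 0\<close> that convex_cone_scaleR[OF assms(1)] by (simp add: divide_nonpos_neg)
    thus False using sep(2) \<open>\<not> 0 \<le> a \<bullet> y\<close> by fastforce
  qed
  ultimately show ?thesis using sep(1) by (intro exI[of _ a]) auto
qed

lemma convex_cone_hull_image_finite:
  fixes f :: "'i \<Rightarrow> 'a::real_vector"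
  assumes "finite I" and "y \<in> convex_cone hull (f ` I)"
  shows "\<exists>u. (\<forall>i\<in>I. 0 \<le> u i) \<and> y = (\<Sum>i\<in>I. u i *\<^sub>R f i)"
proof -
  define S where "S = {(\<Sum>i\<in>I. u i *\<^sub>R f i) | u. \<forall>i\<in>I. 0 \<le> u i}"
  have "convex_cone S" unfolding convex_cone_iff
  proof (intro conjI ballI allI impI)
    show "0 \<in> S" unfolding S_def by (intro CollectI exI[of _ "\<lambda>_. 0"]) simp
  next
    fix y1 y2 assume "y1 \<in> S" "y2 \<in> S"
    then obtain u1 u2 where "\<forall>i\<in>I. 0 \<le> u1 i" "\<forall>i\<in>I. 0 \<le> u2 i"
      "y1 = (\<Sum>i\<in>I. u1 i *\<^sub>R f i)" "y2 = (\<Sum>i\<in>I. u2 i *\<^sub>R f i)"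
      unfolding S_def by blast
    thus "y1 + y2 \<in> S" unfolding S_def
      by (intro CollectI exI[of _ "\<lambda>i. u1 i + u2 i"]) (simp add: scaleR_add_left sum.distrib)
  next
    fix y and r :: real assume "y \<in> S" "0 \<le> r"
    then obtain u where "\<forall>i\<in>I. 0 \<le> u i" "y = (\<Sum>i\<in>I. u i *\<^sub>R f i)" unfolding S_def by blast
    thus "r *\<^sub>R y \<in> S" using \<open>0 \<le> r\<close> unfolding S_def
      by (intro CollectI exI[of _ "\<lambda>i. r * u i"]) (simp add: scaleR_sum_right)
  qed
  moreover have "f ` I \<subseteq> S"
  proof
    fix y assume "y \<in> f ` I"
    then obtain j where "j \<in> I" "y = f j" by blast
    moreover have "(\<Sum>i\<in>I. (if i = j then 1 else 0) *\<^sub>R f i) = (\<Sum>i\<in>I. if i = j then f i else 0)"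
      by (intro sum.cong) auto
    ultimately show "y \<in> S" unfolding S_def using assms(1)
      by (intro CollectI exI[of _ "\<lambda>i. if i = j then 1 else 0"]) (simp add: sum.delta')
  qed
  ultimately have "convex_cone hull (f ` I) \<subseteq> S" by (intro hull_minimal)
  thus ?thesis using assms(2) unfolding S_def by blast
qed

text \<open>Rules out the second alternative of Farkas' lemma, for the homogenised system with rows
  \<open>(a i, \<beta> i)\<close> and \<open>(0, 1)\<close>.\<close>

lemma implied_inequality_not_separable:
  fixes a :: "'i \<Rightarrow> 'a::real_inner"
  assumes feasible: "\<forall>i\<in>I. a i \<bullet> \<gamma>0 \<le> \<beta> i"
    and implied: "\<And>\<gamma>. \<forall>i\<in>I. a i \<bullet> \<gamma> \<le> \<beta> i \<Longrightarrow> w \<bullet> \<gamma> + d \<le> 0"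
    and nonneg: "\<forall>i\<in>I. 0 \<le> p \<bullet> a i + \<tau> * \<beta> i" and "0 \<le> \<tau>"
  shows "\<tau> * d \<le> p \<bullet> w"
proof (cases "\<tau> = 0")
  case False
  hence "\<tau> > 0" using \<open>0 \<le> \<tau>\<close> by simp
  have "\<forall>i\<in>I. a i \<bullet> ((- 1 / \<tau>) *\<^sub>R p) \<le> \<beta> i"
    using nonneg \<open>\<tau> > 0\<close> by (auto simp: inner_commute field_simps)
  hence "w \<bullet> ((- 1 / \<tau>) *\<^sub>R p) + d \<le> 0" by (rule implied)
  thus ?thesis using \<open>\<tau> > 0\<close> by (simp add: inner_commute field_simps)
next
  case True
  show ?thesis
  proof (rule ccontr)
    assume "\<not> \<tau> * d \<le> p \<bullet> w"
    hence "p \<bullet> w < 0" using True by simp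
    define s where "s = (\<bar>w \<bullet> \<gamma>0 + d\<bar> + 1) / - (p \<bullet> w)"
    have "s > 0" unfolding s_def using \<open>p \<bullet> w < 0\<close> by (intro divide_pos_pos) auto
    have "\<forall>i\<in>I. a i \<bullet> (\<gamma>0 - s *\<^sub>R p) \<le> \<beta> i"
      using feasible nonneg True \<open>s > 0\<close>
      by (auto simp: inner_diff_right inner_commute intro: add_increasing2 order.trans[rotated])
    hence "w \<bullet> (\<gamma>0 - s *\<^sub>R p) + d \<le> 0" by (rule implied)
    moreover have "s * (p \<bullet> w) = - (\<bar>w \<bullet> \<gamma>0 + d\<bar> + 1)"
      using \<open>p \<bullet> w < 0\<close> by (simp add: s_def)
    hence "w \<bullet> (\<gamma>0 - s *\<^sub>R p) + d = (w \<bullet> \<gamma>0 + d) + (\<bar>w \<bullet> \<gamma>0 + d\<bar> + 1)"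
      by (simp only: inner_diff_right inner_scaleR_right inner_commute[of w p])
    ultimately show False by linarith
  qed
qed

lemma sum_insert_None_Some:
  "finite I \<Longrightarrow> (\<Sum>k\<in>insert None (Some ` I). g k) = g None + (\<Sum>i\<in>I. g (Some i))"
  by (simp add: sum.reindex)

lemma farkas_affine:
  fixes a :: "'i \<Rightarrow> 'a::euclidean_space"
  assumes "finite I" and feasible: "\<forall>i\<in>I. a i \<bullet> \<gamma>0 \<le> \<beta> i"
    and implied: "\<And>\<gamma>. \<forall>i\<in>I. a i \<bullet> \<gamma> \<le> \<beta> i \<Longrightarrow> w \<bullet> \<gamma> + d \<le> 0"
  shows "\<exists>y. (\<forall>i\<in>I. 0 \<le> y i) \<and> w = (\<Sum>i\<in>I. y i *\<^sub>R a i) \<and> d + (\<Sum>i\<in>I. y i * \<beta> i) \<le> 0"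
proof -
  define J where "J = insert None (Some ` I)"
  define f where "f k = (case k of None \<Rightarrow> (0, 1) | Some i \<Rightarrow> (a i, \<beta> i))" for k
  have "finite J" using assms(1) by (simp add: J_def)
  show ?thesis
  proof (cases "(w, - d) \<in> convex_cone hull (f ` J)")
    case True
    then obtain u where u: "\<forall>k\<in>J. 0 \<le> u k" "(w, - d) = (\<Sum>k\<in>J. u k *\<^sub>R f k)"
      using convex_cone_hull_image_finite[OF \<open>finite J\<close>] by blast
    hence "(w, - d) = (0, u None) + (\<Sum>i\<in>I. (u (Some i) *\<^sub>R a i, u (Some i) * \<beta> i))"
      unfolding J_def sum_insert_None_Some[OF assms(1)] by (simp add: f_def)
    hence "w = (\<Sum>i\<in>I. u (Some i) *\<^sub>R a i)" "- d = u None + (\<Sum>i\<in>I. u (Some i) * \<beta> i)"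
      by (simp_all add: prod_eq_iff fst_sum snd_sum)
    moreover have "0 \<le> u None" "\<forall>i\<in>I. 0 \<le> u (Some i)" using u(1) by (auto simp: J_def)
    ultimately show ?thesis by (intro exI[of _ "\<lambda>i. u (Some i)"]) auto
  next
    case False
    then obtain pt where sep: "pt \<bullet> (w, - d) < 0" and nonneg: "\<forall>y\<in>convex_cone hull (f ` J). 0 \<le> pt \<bullet> y"
      using separating_hyperplane_closed_cone[OF convex_cone_convex_cone_hull
          closed_convex_cone_hull[OF finite_imageI[OF \<open>finite J\<close>]]] by blast
    obtain p \<tau> where pt: "pt = (p, \<tau>)" by fastforce
    have gen: "0 \<le> pt \<bullet> f k" if "k \<in> J" for k
      using nonneg hull_inc[OF imageI[OF that]] by blast
    have "0 \<le> \<tau>" using gen[of None] by (simp add: J_def f_def pt)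
    moreover have "\<forall>i\<in>I. 0 \<le> p \<bullet> a i + \<tau> * \<beta> i"
    proof
      fix i assume "i \<in> I"
      thus "0 \<le> p \<bullet> a i + \<tau> * \<beta> i" using gen[of "Some i"] by (simp add: J_def f_def pt)
    qed
    ultimately have "\<tau> * d \<le> p \<bullet> w"
      by (intro implied_inequality_not_separable[OF feasible implied])
    thus ?thesis using sep by (simp add: pt)
  qed
qed

lemma polyhedron_inequality_system:
  fixes G :: "'a::euclidean_space set"
  assumes "polyhedron G"
  obtains I :: "'a set set" and a \<beta> where "finite I" "G = {\<gamma>. \<forall>i\<in>I. a i \<bullet> \<gamma> \<le> \<beta> i}"
proof -
  obtain Fam where "finite Fam" "G = \<Inter> Fam" and half: "\<forall>h\<in>Fam. \<exists>a b. a \<noteq> 0 \<and> h = {x. a \<bullet> x \<le> b}"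
    using assms unfolding polyhedron_def by blast
  from half obtain a \<beta> where "\<forall>h\<in>Fam. h = {x. a h \<bullet> x \<le> \<beta> h}" by metis
  hence "G = {\<gamma>. \<forall>h\<in>Fam. a h \<bullet> \<gamma> \<le> \<beta> h}" using \<open>G = \<Inter> Fam\<close> by blast
  thus thesis using \<open>finite Fam\<close> that by blast
qed

definition affine_functional :: "('a::real_inner \<Rightarrow> real) \<Rightarrow> bool" where
  "affine_functional f \<longleftrightarrow> (\<exists>w d. \<forall>x. f x = w \<bullet> x + d)"

text \<open>On \<open>G\<close> the extra row \<open>g \<ge> 0\<close> cuts out the zero set of \<open>g\<close>, so \<open>h \<le> 0\<close> is implied by the
  system of \<open>G\<close> plus that row; its Farkas multiplier is the constant.\<close>

lemma affine_bounded_by_multiple_on_polyhedron: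
  fixes G :: "'a::euclidean_space set"
  assumes "polyhedron G" "affine_functional g" "affine_functional h"
    and "\<forall>\<gamma>\<in>G. g \<gamma> \<le> 0" "\<gamma>0 \<in> G" "g \<gamma>0 = 0" "\<forall>\<gamma>\<in>G. g \<gamma> = 0 \<longrightarrow> h \<gamma> \<le> 0"
  shows "\<exists>C\<ge>0. \<forall>\<gamma>\<in>G. h \<gamma> \<le> C * - g \<gamma>"
proof -
  obtain wg dg wh dh where g: "\<And>x. g x = wg \<bullet> x + dg" and h: "\<And>x. h x = wh \<bullet> x + dh"
    using assms(2,3) unfolding affine_functional_def by blast
  obtain I :: "'a set set" and a \<beta> where "finite I" and G: "G = {\<gamma>. \<forall>i\<in>I. a i \<bullet> \<gamma> \<le> \<beta> i}"
    using polyhedron_inequality_system[OF assms(1)] by blast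
  define a' where "a' k = (case k of None \<Rightarrow> - wg | Some i \<Rightarrow> a i)" for k
  define \<beta>' where "\<beta>' k = (case k of None \<Rightarrow> dg | Some i \<Rightarrow> \<beta> i)" for k
  have system: "(\<forall>k\<in>insert None (Some ` I). a' k \<bullet> \<gamma> \<le> \<beta>' k) \<longleftrightarrow> \<gamma> \<in> G \<and> 0 \<le> g \<gamma>" for \<gamma>
    by (auto simp: a'_def \<beta>'_def G g)
  obtain y where y: "\<forall>k\<in>insert None (Some ` I). 0 \<le> y k"
    "wh = (\<Sum>k\<in>insert None (Some ` I). y k *\<^sub>R a' k)"
    "dh + (\<Sum>k\<in>insert None (Some ` I). y k * \<beta>' k) \<le> 0"
  proof (rule farkas_affine[of "insert None (Some ` I)" a' \<gamma>0 \<beta>' wh dh, THEN exE])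
    show "finite (insert None (Some ` I))" using \<open>finite I\<close> by simp
    show "\<forall>k\<in>insert None (Some ` I). a' k \<bullet> \<gamma>0 \<le> \<beta>' k" using system assms(5,6) by simp
    show "wh \<bullet> \<gamma> + dh \<le> 0" if "\<forall>k\<in>insert None (Some ` I). a' k \<bullet> \<gamma> \<le> \<beta>' k" for \<gamma>
    proof -
      have "\<gamma> \<in> G" "0 \<le> g \<gamma>" using that system by blast+
      hence "g \<gamma> = 0" using assms(4) by (simp add: order_antisym)
      thus ?thesis using \<open>\<gamma> \<in> G\<close> assms(7) by (simp add: h)
    qed
  qed blast
  have "h \<gamma> \<le> y None * - g \<gamma>" if "\<gamma> \<in> G" for \<gamma>
  proof -
    have "h \<gamma> = - y None * (wg \<bullet> \<gamma>) + (\<Sum>i\<in>I. y (Some i) * (a i \<bullet> \<gamma>)) + dh"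
      using y(2)[unfolded sum_insert_None_Some[OF \<open>finite I\<close>]]
      by (simp add: h a'_def inner_sum_left inner_diff_left)
    also have "\<dots> \<le> - y None * (wg \<bullet> \<gamma>) + (\<Sum>i\<in>I. y (Some i) * \<beta> i) + dh"
      using that y(1) by (auto simp: G intro!: sum_mono mult_left_mono)
    also have "\<dots> \<le> y None * - g \<gamma>"
      using y(3)[unfolded sum_insert_None_Some[OF \<open>finite I\<close>]] by (simp add: g \<beta>'_def algebra_simps)
    finally show ?thesis .
  qed
  thus ?thesis using y(1) by (intro exI[of _ "y None"]) auto
qed

lemma affine_functional_sum:
  "affine_functional (\<lambda>\<gamma>::real^'m::finite. f0 + (\<Sum>k\<in>UNIV. \<gamma>$k * g k))"
  unfolding affine_functional_def
  by (intro exI[of _ "\<chi> k. g k"] exI[of _ f0]) (simp add: inner_vec_def mult.commute)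

lemma affine_functional_scale_shift:
  "affine_functional f \<Longrightarrow> affine_functional (\<lambda>x. r * f x + s)"
  unfolding affine_functional_def
  by (metis (no_types) add.assoc distrib_left inner_scaleR_left)

lemma abs_affine_bounded_by_multiple_on_polyhedron:
  fixes G :: "'a::euclidean_space set"
  assumes G: "polyhedron G" and aff: "affine_functional g" "affine_functional h"
    and g: "\<forall>\<gamma>\<in>G. g \<gamma> \<le> 0" "\<gamma>0 \<in> G" "g \<gamma>0 = 0" and zero: "\<forall>\<gamma>\<in>G. g \<gamma> = 0 \<longrightarrow> h \<gamma> = 0"
  shows "\<exists>C\<ge>0. \<forall>\<gamma>\<in>G. \<bar>h \<gamma>\<bar> \<le> C * - g \<gamma>"
proof -
  have "affine_functional (\<lambda>\<gamma>. - 1 * h \<gamma> + 0)"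
    by (rule affine_functional_scale_shift[OF aff(2)])
  hence aff_neg: "affine_functional (\<lambda>\<gamma>. - h \<gamma>)" by simp
  obtain C1 where C1: "C1 \<ge> 0" "\<forall>\<gamma>\<in>G. h \<gamma> \<le> C1 * - g \<gamma>"
    using affine_bounded_by_multiple_on_polyhedron[OF G aff g] zero by auto
  obtain C2 where C2: "C2 \<ge> 0" "\<forall>\<gamma>\<in>G. - h \<gamma> \<le> C2 * - g \<gamma>"
    using affine_bounded_by_multiple_on_polyhedron[OF G aff(1) aff_neg g] zero by auto
  have "\<bar>h \<gamma>\<bar> \<le> (C1 + C2) * - g \<gamma>" if "\<gamma> \<in> G" for \<gamma>
  proof -
    have "0 \<le> - g \<gamma>" using g(1) that by simp
    hence "0 \<le> C1 * - g \<gamma>" "0 \<le> C2 * - g \<gamma>" using C1(1) C2(1) by (metis mult_nonneg_nonneg)+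
    moreover have "h \<gamma> \<le> C1 * - g \<gamma>" "- h \<gamma> \<le> C2 * - g \<gamma>" using C1(2) C2(2) that by auto
    ultimately show ?thesis unfolding abs_le_iff distrib_right by linarith
  qed
  thus ?thesis using C1(1) C2(1) by (intro exI[of _ "C1 + C2"]) auto
qed

lemma quadratic_perturbation_nonpos_on_polyhedron:
  fixes G :: "'a::euclidean_space set"
  assumes G: "polyhedron G" and aff: "affine_functional p" "affine_functional h" "affine_functional Q"
    and p: "\<forall>\<gamma>\<in>G. p \<gamma> \<le> 0" "\<gamma>0 \<in> G" "p \<gamma>0 = 0"
    and zero: "\<forall>\<gamma>\<in>G. p \<gamma> = 0 \<longrightarrow> h \<gamma> = 0 \<and> Q \<gamma> = 0"
  shows "\<exists>\<epsilon>>0. \<forall>e. \<bar>e\<bar> \<le> \<epsilon> \<longrightarrow> (\<forall>\<gamma>\<in>G. p \<gamma> + e * h \<gamma> + e\<^sup>2 * Q \<gamma> \<le> 0)"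
proof -
  obtain Ch where Ch: "Ch \<ge> 0" "\<forall>\<gamma>\<in>G. \<bar>h \<gamma>\<bar> \<le> Ch * - p \<gamma>"
    using abs_affine_bounded_by_multiple_on_polyhedron[OF G aff(1,2) p] zero by auto
  obtain CQ where CQ: "CQ \<ge> 0" "\<forall>\<gamma>\<in>G. Q \<gamma> \<le> CQ * - p \<gamma>"
    using affine_bounded_by_multiple_on_polyhedron[OF G aff(1,3) p] zero by auto
  define C where "C = Ch + CQ"
  have "C \<ge> 0" using Ch CQ by (simp add: C_def)
  have bounds: "\<bar>h \<gamma>\<bar> \<le> C * - p \<gamma>" "Q \<gamma> \<le> C * - p \<gamma>" if "\<gamma> \<in> G" for \<gamma>
  proof -
    have "0 \<le> - p \<gamma>" using p(1) that by simp
    hence "Ch * - p \<gamma> \<le> C * - p \<gamma>" "CQ * - p \<gamma> \<le> C * - p \<gamma>"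
      using Ch(1) CQ(1) by (metis C_def le_add_same_cancel1 le_add_same_cancel2 mult_right_mono)+
    thus "\<bar>h \<gamma>\<bar> \<le> C * - p \<gamma>" "Q \<gamma> \<le> C * - p \<gamma>" using Ch CQ that by fastforce+
  qed
  define \<epsilon> where "\<epsilon> = 1 / (2 * C + 2)"
  have "\<epsilon> > 0" "\<epsilon> \<le> 1" "2 * \<epsilon> * C \<le> 1" using \<open>C \<ge> 0\<close> by (simp_all add: \<epsilon>_def field_simps)
  have "p \<gamma> + e * h \<gamma> + e\<^sup>2 * Q \<gamma> \<le> 0" if e: "\<bar>e\<bar> \<le> \<epsilon>" and "\<gamma> \<in> G" for e \<gamma>
  proof -
    have np: "0 \<le> - p \<gamma>" using p(1) \<open>\<gamma> \<in> G\<close> by simp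
    have "e * h \<gamma> \<le> \<bar>e\<bar> * \<bar>h \<gamma>\<bar>" by (simp add: abs_mult[symmetric])
    also have "\<dots> \<le> \<bar>e\<bar> * (C * - p \<gamma>)"
      using bounds(1)[OF \<open>\<gamma> \<in> G\<close>] abs_ge_zero by (rule mult_left_mono)
    finally have lin: "e * h \<gamma> \<le> \<bar>e\<bar> * (C * - p \<gamma>)" .
    have "e\<^sup>2 = \<bar>e\<bar> * \<bar>e\<bar>" by (simp add: power2_eq_square abs_mult_self_eq)
    also have "\<dots> \<le> \<bar>e\<bar> * 1" using e \<open>\<epsilon> \<le> 1\<close> by (intro mult_left_mono) auto
    finally have "e\<^sup>2 \<le> \<bar>e\<bar>" by simp
    hence "e\<^sup>2 * Q \<gamma> \<le> \<bar>e\<bar> * (C * - p \<gamma>)"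
      using bounds(2)[OF \<open>\<gamma> \<in> G\<close>] \<open>C \<ge> 0\<close> np
      by (meson mult_left_mono mult_right_mono mult_nonneg_nonneg zero_le_power2 order_trans)
    moreover have "2 * \<bar>e\<bar> * C \<le> 2 * \<epsilon> * C" using e \<open>C \<ge> 0\<close> by (simp add: mult_right_mono)
    hence "(2 * \<bar>e\<bar> * C) * - p \<gamma> \<le> 1 * - p \<gamma>"
      using \<open>2 * \<epsilon> * C \<le> 1\<close> np by (intro mult_right_mono) auto
    ultimately show ?thesis using lin by (simp add: algebra_simps)
  qed
  thus ?thesis using \<open>\<epsilon> > 0\<close> by blast
qed

lemma exists_direction_in_subspace_orthogonal_to_affine_set:
  fixes V B :: "'a::euclidean_space set"
  assumes "subspace V" and "b0 \<in> B" and "aff_dim B + 1 \<le> int (dim V)"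
  shows "\<exists>v\<in>V. v \<noteq> 0 \<and> (\<forall>y\<in>B. y \<bullet> v = b0 \<bullet> v)"
proof -
  define W where "W = span ((+) (- b0) ` B)"
  have "aff_dim B = int (dim W)"
    unfolding W_def dim_span by (rule aff_dim_eq_dim) (simp add: assms(2) hull_inc)
  have "{y \<in> UNIV. \<forall>x\<in>W. orthogonal x y} = W\<^sup>\<bottom>" by (simp add: orthogonal_comp_def)
  hence "dim (W\<^sup>\<bottom>) + dim W = dim (UNIV :: 'a set)"
    using dim_subspace_orthogonal_to_vectors[OF _ subspace_UNIV subset_UNIV, of W]
    by (simp add: W_def)
  moreover have "dim {x + y |x y. x \<in> V \<and> y \<in> W\<^sup>\<bottom>} + dim (V \<inter> W\<^sup>\<bottom>) = dim V + dim (W\<^sup>\<bottom>)"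
    by (rule dim_sums_Int[OF assms(1) subspace_orthogonal_comp])
  moreover have "dim {x + y |x y. x \<in> V \<and> y \<in> W\<^sup>\<bottom>} \<le> dim (UNIV :: 'a set)"
    by (rule dim_subset) simp
  ultimately have "dim (V \<inter> W\<^sup>\<bottom>) \<noteq> 0" using assms(3) \<open>aff_dim B = int (dim W)\<close> by linarith
  hence "\<not> V \<inter> W\<^sup>\<bottom> \<subseteq> {0}" by (simp add: dim_eq_0)
  then obtain v where v: "v \<in> V" "v \<in> W\<^sup>\<bottom>" "v \<noteq> 0" by blast
  have "y \<bullet> v = b0 \<bullet> v" if "y \<in> B" for y
  proof -
    have "- b0 + y \<in> W" using that by (simp add: W_def span_base)
    hence "(- b0 + y) \<bullet> v = 0" using v(2) by (simp add: orthogonal_comp_def orthogonal_def)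
    thus ?thesis by (simp add: inner_diff_left)
  qed
  thus ?thesis using v by blast
qed

section \<open>Lagrangian duality for the Shor relaxation\<close>

locale qcqp =
  fixes A0 :: "real^'n^'n" and b0 :: "real^'n" and c0 :: real
    and A :: "'m::finite \<Rightarrow> real^'n^'n" and b :: "'m \<Rightarrow> real^'n" and c :: "'m \<Rightarrow> real"
    and MI :: "'m set"
  assumes symm_A0: "symm A0" and symm_A: "\<forall>i. symm (A i)"
begin

abbreviation "\<Gamma> \<equiv> Gamma A0 A MI"
abbreviation "q \<equiv> qgam A0 b0 c0 A b c"
abbreviation "\<D> \<equiv> D_SDP A0 b0 c0 A b c MI"

lemma symm_Agam: "symm (Agam A0 A \<gamma>)"
  unfolding Agam_def using symm_A0 symm_A by (intro symm_add symm_sum symm_scaleR) auto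

lemma weak_duality:
  assumes "(x, t) \<in> \<D>" and "\<gamma> \<in> \<Gamma>"
  shows "q \<gamma> x \<le> 2 * t"
proof -
  from assms(1)[unfolded D_SDP_iff] obtain Z where Z: "symm Z" "psd Z"
    "qf A0 b0 c0 x + frob A0 Z \<le> 2 * t"
    "\<forall>i\<in>MI. qf (A i) (b i) (c i) x + frob (A i) Z \<le> 0"
    "\<forall>i\<in>- MI. qf (A i) (b i) (c i) x + frob (A i) Z = 0"
    by blast
  have \<gamma>: "psd (Agam A0 A \<gamma>)" "\<forall>i\<in>MI. 0 \<le> \<gamma>$i" using assms(2) by (auto simp: Gamma_def)
  have "q \<gamma> x + frob (Agam A0 A \<gamma>) Z
      = (qf A0 b0 c0 x + frob A0 Z) + (\<Sum>i\<in>UNIV. \<gamma>$i * (qf (A i) (b i) (c i) x + frob (A i) Z))"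
    by (simp add: qgam_def frob_Agam distrib_left sum.distrib)
  also have "(\<Sum>i\<in>UNIV. \<gamma>$i * (qf (A i) (b i) (c i) x + frob (A i) Z)) \<le> 0"
  proof (rule sum_nonpos)
    fix i
    show "\<gamma>$i * (qf (A i) (b i) (c i) x + frob (A i) Z) \<le> 0"
      using Z(4,5) \<gamma>(2) by (cases "i \<in> MI") (simp_all add: mult_nonneg_nonpos)
  qed
  finally have "q \<gamma> x + frob (Agam A0 A \<gamma>) Z \<le> 2 * t" using Z(3) by linarith
  moreover have "0 \<le> frob (Agam A0 A \<gamma>) Z" by (rule frob_psd_nonneg[OF symm_Agam \<gamma>(1) Z(2)])
  ultimately show ?thesis by linarith
qed

text \<open>Strong duality separates \<open>gap x t\<close> from the cone of all \<open>(\<langle>A\<^sub>k, Z\<rangle>)\<^sub>k\<close> plus slacks,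
  with \<open>Z\<close> positive semidefinite.  That cone need not be closed, so the separation uses the closed
  subcone generated by the values of the quadratic forms on the unit sphere and the slack
  directions.\<close>

definition quad_values :: "real^'n \<Rightarrow> real^('m option)" where
  "quad_values v = (\<chi> k. case k of None \<Rightarrow> v \<bullet> (A0 *v v) | Some i \<Rightarrow> v \<bullet> (A i *v v))"

definition frob_values :: "real^'n^'n \<Rightarrow> real^('m option)" where
  "frob_values Z = (\<chi> k. case k of None \<Rightarrow> frob A0 Z | Some i \<Rightarrow> frob (A i) Z)"

definition slack_cone :: "(real^('m option)) set" where
  "slack_cone = {z. 0 \<le> z$None \<and> (\<forall>i\<in>MI. 0 \<le> z$Some i) \<and> (\<forall>i\<in>- MI. z$Some i = 0)}"

definition lifted_cone :: "(real^('m option)) set" where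
  "lifted_cone = {frob_values Z + z | Z z. symm Z \<and> psd Z \<and> z \<in> slack_cone}"

definition generators :: "(real^('m option)) set" where
  "generators = quad_values ` sphere 0 1 \<union> {axis None 1} \<union> (\<lambda>i. axis (Some i) 1) ` MI"

definition gap :: "real^'n \<Rightarrow> real \<Rightarrow> real^('m option)" where
  "gap x t = (\<chi> k. case k of None \<Rightarrow> 2 * t - qf A0 b0 c0 x | Some i \<Rightarrow> - qf (A i) (b i) (c i) x)"

lemma frob_values_zero [simp]: "frob_values 0 = 0"
  by (simp add: frob_values_def vec_eq_iff split: option.split)

lemma D_SDP_if_gap_in_lifted_cone:
  assumes "gap x t \<in> lifted_cone"
  shows "(x, t) \<in> \<D>"
proof -
  obtain Z z where eq: "gap x t = frob_values Z + z" and Z: "symm Z" "psd Z"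
    and z: "z \<in> slack_cone"
    using assms by (auto simp: lifted_cone_def)
  have comp: "gap x t $ k = frob_values Z $ k + z $ k" for k using eq by simp
  have "qf A0 b0 c0 x + frob A0 Z = 2 * t - z$None"
    "qf (A i) (b i) (c i) x + frob (A i) Z = - z$Some i" for i
    using comp[of None] comp[of "Some i"] by (simp_all add: gap_def frob_values_def)
  thus ?thesis using z Z unfolding D_SDP_iff slack_cone_def by (intro exI[of _ Z]) auto
qed

lemma convex_cone_lifted_cone: "convex_cone lifted_cone"
  unfolding convex_cone_iff
proof (intro conjI ballI allI impI)
  show "0 \<in> lifted_cone"
    unfolding lifted_cone_def slack_cone_def
    by (intro CollectI exI[of _ 0] exI[of _ 0]) (simp add: psd_def)
next
  fix y1 y2 assume "y1 \<in> lifted_cone" "y2 \<in> lifted_cone"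
  then obtain Z1 z1 Z2 z2 where "y1 = frob_values Z1 + z1" "symm Z1" "psd Z1" "z1 \<in> slack_cone"
    "y2 = frob_values Z2 + z2" "symm Z2" "psd Z2" "z2 \<in> slack_cone"
    unfolding lifted_cone_def by blast
  moreover have "frob_values (Z1 + Z2) = frob_values Z1 + frob_values Z2"
    by (simp add: frob_values_def vec_eq_iff frob_add_right split: option.split)
  ultimately show "y1 + y2 \<in> lifted_cone"
    unfolding lifted_cone_def slack_cone_def
    by (intro CollectI exI[of _ "Z1 + Z2"] exI[of _ "z1 + z2"]) (auto simp: symm_add psd_add)
next
  fix y and r :: real assume "y \<in> lifted_cone" "0 \<le> r"
  then obtain Z z where "y = frob_values Z + z" "symm Z" "psd Z" "z \<in> slack_cone"
    unfolding lifted_cone_def by blast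
  moreover have "frob_values (r *\<^sub>R Z) = r *\<^sub>R frob_values Z"
    by (simp add: frob_values_def vec_eq_iff frob_commute[of _ "r *\<^sub>R Z"] frob_scaleR_left
        frob_commute[of _ Z] split: option.split)
  ultimately show "r *\<^sub>R y \<in> lifted_cone"
    unfolding lifted_cone_def slack_cone_def using \<open>0 \<le> r\<close>
    by (intro CollectI exI[of _ "r *\<^sub>R Z"] exI[of _ "r *\<^sub>R z"])
      (auto simp: symm_scaleR psd_scaleR scaleR_add_right)
qed

lemma quad_values_eq: "quad_values v = frob_values (outer v v)"
  by (simp add: quad_values_def frob_values_def frob_outer vec_eq_iff split: option.split)

lemma generators_subset_lifted_cone: "generators \<subseteq> lifted_cone"
proof -
  have "quad_values v \<in> lifted_cone" for v
    unfolding quad_values_eq lifted_cone_def slack_cone_def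
    by (intro CollectI exI[of _ "outer v v"] exI[of _ 0]) (simp add: symm_outer psd_outer)
  moreover have "axis k 1 \<in> lifted_cone" if "k = None \<or> (\<exists>i\<in>MI. k = Some i)" for k
    unfolding lifted_cone_def slack_cone_def using that
    by (intro CollectI exI[of _ 0] exI[of _ "axis k 1"])
      (auto simp: psd_def axis_def)
  ultimately show ?thesis unfolding generators_def by blast
qed

lemma inner_quad_values:
  "a \<bullet> quad_values v = a$None * (v \<bullet> (A0 *v v)) + (\<Sum>i\<in>UNIV. a$Some i * (v \<bullet> (A i *v v)))"
  by (simp add: inner_option_vec quad_values_def)

text \<open>Under Slater's condition the generators lie in an open half-space, which makes the cone
  they generate closed.\<close>

lemma positive_functional_on_generators:
  assumes "\<gamma>s \<in> \<Gamma>" and "pd (Agam A0 A \<gamma>s)"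
  shows "\<exists>w. \<forall>y\<in>generators. 0 < w \<bullet> y"
proof -
  obtain \<delta> where "\<delta> > 0" and pd: "pd (Agam A0 A \<gamma>s + \<delta> *\<^sub>R (\<Sum>i\<in>MI. A i))"
    using pd_add_small[OF assms(2)] by blast
  define w :: "real^('m option)" where
    "w = (\<chi> k. case k of None \<Rightarrow> 1 | Some i \<Rightarrow> \<gamma>s$i + (if i \<in> MI then \<delta> else 0))"
  have "w \<bullet> quad_values u = u \<bullet> ((Agam A0 A \<gamma>s + \<delta> *\<^sub>R (\<Sum>i\<in>MI. A i)) *v u)" for u
  proof -
    have "(\<Sum>i\<in>UNIV. (if i \<in> MI then \<delta> else 0) * (u \<bullet> (A i *v u)))
        = (\<Sum>i\<in>UNIV. if i \<in> MI then \<delta> * (u \<bullet> (A i *v u)) else 0)"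
      by (rule sum.cong) auto
    also have "\<dots> = \<delta> * (\<Sum>i\<in>MI. u \<bullet> (A i *v u))"
      by (simp add: sum.If_cases sum_distrib_left)
    finally have "(\<Sum>i\<in>UNIV. (if i \<in> MI then \<delta> else 0) * (u \<bullet> (A i *v u)))
        = \<delta> * (\<Sum>i\<in>MI. u \<bullet> (A i *v u))" .
    thus ?thesis
      by (simp add: w_def inner_quad_values inner_Agam matrix_vector_mult_add_rdistrib inner_add_right
          scaleR_matrix_vector_assoc[symmetric] sum_matrix_vector_mult inner_sum_right
          distrib_right sum.distrib)
  qed
  moreover have "0 < u \<bullet> ((Agam A0 A \<gamma>s + \<delta> *\<^sub>R (\<Sum>i\<in>MI. A i)) *v u)"
    if "u \<in> sphere 0 1" for u
    using that pd unfolding pd_def by (metis mem_sphere_0 norm_zero zero_neq_one)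
  moreover have "\<forall>i\<in>MI. 0 \<le> \<gamma>s$i" using assms(1) by (simp add: Gamma_def)
  ultimately have "0 < w \<bullet> y" if "y \<in> generators" for y
    using that \<open>\<delta> > 0\<close> by (auto simp: generators_def w_def inner_axis add_nonneg_pos)
  thus ?thesis by blast
qed

lemma closed_generated_cone:
  assumes "\<gamma>s \<in> \<Gamma>" and "pd (Agam A0 A \<gamma>s)"
  shows "closed (convex_cone hull generators)"
proof -
  obtain w where w: "\<forall>y\<in>generators. 0 < w \<bullet> y"
    using positive_functional_on_generators[OF assms] by blast
  have "convex hull generators \<subseteq> {y. 0 < w \<bullet> y}"
    using w by (intro hull_minimal) (auto simp: convex_halfspace_gt)
  hence "0 \<notin> convex hull generators" by auto
  moreover have "continuous_on (sphere 0 1) quad_values"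
    unfolding quad_values_def
    by (intro continuous_on_vec_lambda, case_tac i)
      (auto intro!: continuous_intros matrix_vector_mult_linear_continuous_on)
  hence "compact generators"
    unfolding generators_def
    by (intro compact_Un compact_continuous_image compact_sphere finite_imp_compact) auto
  moreover have "generators \<noteq> {}" by (simp add: generators_def)
  ultimately show ?thesis
    by (simp add: convex_cone_hull_separate_nonempty closed_conic_hull compact_convex_hull)
qed

lemma quad_values_in_generated_cone: "quad_values v \<in> convex_cone hull generators"
proof (cases "v = 0")
  case True
  have "quad_values 0 = 0" by (simp add: quad_values_def vec_eq_iff split: option.split)
  thus ?thesis using True convex_cone_hull_contains_0 by simp
next
  case False
  have "quad_values ((1 / norm v) *\<^sub>R v) \<in> convex_cone hull generators"
    using False by (intro hull_inc) (simp add: generators_def)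
  moreover have "quad_values v = (norm v)\<^sup>2 *\<^sub>R quad_values ((1 / norm v) *\<^sub>R v)"
    using False by (simp add: quad_values_def vec_eq_iff matrix_vector_mult_scaleR power2_eq_square
        split: option.split)
  ultimately show ?thesis
    by (simp add: convex_cone_hull_mul)
qed

text \<open>A functional separating \<open>gap x t\<close> from the cone yields a dual point: the ratio of its
  constraint part to its objective part, pulled slightly towards the Slater point \<open>\<gamma>s\<close> so that
  the case of a vanishing objective part is covered as well.\<close>

lemma dual_point_of_separating_functional:
  assumes \<gamma>s: "\<gamma>s \<in> \<Gamma>"
    and aN: "0 \<le> a$None" and aS: "\<forall>i\<in>MI. 0 \<le> a$Some i"
    and aQ: "\<And>v. 0 \<le> a \<bullet> quad_values v" and sep: "a \<bullet> gap x t < 0"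
  shows "\<exists>\<gamma>\<in>\<Gamma>. 2 * t < q \<gamma> x"
proof -
  define d :: "real^'m" where "d = (\<chi> i. a$Some i)"
  define \<beta> where "\<beta> = a$None * qf A0 b0 c0 x + (\<Sum>k\<in>UNIV. d$k * qf (A k) (b k) (c k) x) - 2 * t * a$None"
  have "a \<bullet> gap x t = a$None * (2 * t - qf A0 b0 c0 x) - (\<Sum>k\<in>UNIV. d$k * qf (A k) (b k) (c k) x)"
    by (simp add: inner_option_vec gap_def d_def sum_negf)
  hence "\<beta> > 0" using sep by (simp add: \<beta>_def right_diff_distrib mult.commute)
  define l where "l = \<beta> / (\<bar>q \<gamma>s x - 2 * t\<bar> + 1)"
  have "l > 0" using \<open>\<beta> > 0\<close> by (simp add: l_def)
  have l_small: "l * \<bar>q \<gamma>s x - 2 * t\<bar> < \<beta>"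
    using \<open>\<beta> > 0\<close> by (simp add: l_def field_simps)
  define \<kappa> where "\<kappa> = l + a$None"
  have "\<kappa> > 0" using \<open>l > 0\<close> aN by (simp add: \<kappa>_def)
  define \<gamma> where "\<gamma> = (1 / \<kappa>) *\<^sub>R (l *\<^sub>R \<gamma>s + d)"
  have "\<kappa> * (v \<bullet> (Agam A0 A \<gamma> *v v))
      = l * (v \<bullet> (Agam A0 A \<gamma>s *v v)) + a \<bullet> quad_values v" for v
    unfolding inner_Agam inner_quad_values \<gamma>_def
    using sum_affine_combination[OF \<kappa>_def, where \<gamma>=\<gamma>s and d=d] \<open>\<kappa> > 0\<close> by (simp add: d_def)
  hence "0 \<le> \<kappa> * (v \<bullet> (Agam A0 A \<gamma> *v v))" for v
    using \<gamma>s \<open>l > 0\<close> aQ[of v] by (simp add: Gamma_def psd_def)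
  hence "psd (Agam A0 A \<gamma>)" using \<open>\<kappa> > 0\<close> by (simp add: psd_def zero_le_mult_iff)
  moreover have "\<forall>i\<in>MI. 0 \<le> \<gamma>$i"
    using \<gamma>s aS \<open>l > 0\<close> \<open>\<kappa> > 0\<close> by (simp add: \<gamma>_def d_def Gamma_def)
  moreover have "\<kappa> * q \<gamma> x = l * q \<gamma>s x + \<beta> + 2 * t * a$None"
    unfolding qgam_def \<gamma>_def
    using sum_affine_combination[OF \<kappa>_def, where \<gamma>=\<gamma>s and d=d] \<open>\<kappa> > 0\<close> by (simp add: \<beta>_def)
  moreover have "l * (2 * t - q \<gamma>s x) \<le> l * \<bar>q \<gamma>s x - 2 * t\<bar>"
    using \<open>l > 0\<close> by (intro mult_left_mono) auto
  moreover have "\<kappa> * (2 * t) = l * (2 * t) + 2 * t * a$None" by (simp add: \<kappa>_def algebra_simps)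
  ultimately have "psd (Agam A0 A \<gamma>)" "\<forall>i\<in>MI. 0 \<le> \<gamma>$i" "\<kappa> * (2 * t) < \<kappa> * q \<gamma> x"
    using l_small by (simp_all add: right_diff_distrib)
  thus ?thesis using \<open>\<kappa> > 0\<close> by (intro bexI[of _ \<gamma>]) (simp_all add: Gamma_def)
qed

theorem strong_duality:
  assumes "\<gamma>s \<in> \<Gamma>" and "pd (Agam A0 A \<gamma>s)" and "\<forall>\<gamma>\<in>\<Gamma>. q \<gamma> x \<le> 2 * t"
  shows "(x, t) \<in> \<D>"
proof (cases "gap x t \<in> convex_cone hull generators")
  case True
  have "convex_cone hull generators \<subseteq> lifted_cone"
    using generators_subset_lifted_cone convex_cone_lifted_cone by (intro hull_minimal)
  thus ?thesis using True D_SDP_if_gap_in_lifted_cone by blast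
next
  case False
  then obtain a where sep: "a \<bullet> gap x t < 0"
    and nonneg: "\<forall>y\<in>convex_cone hull generators. 0 \<le> a \<bullet> y"
    using separating_hyperplane_closed_cone[OF convex_cone_convex_cone_hull
        closed_generated_cone[OF assms(1,2)]] by blast
  have axes: "axis k 1 \<in> convex_cone hull generators"
    if "k = None \<or> (\<exists>i\<in>MI. k = Some i)" for k
    using that by (intro hull_inc) (auto simp: generators_def)
  have "0 \<le> a$k" if "k = None \<or> (\<exists>i\<in>MI. k = Some i)" for k
    using nonneg axes[OF that] by (fastforce simp: inner_axis)
  hence "0 \<le> a$None" "\<forall>i\<in>MI. 0 \<le> a$Some i" by auto
  with nonneg quad_values_in_generated_cone sep
  obtain \<gamma> where "\<gamma> \<in> \<Gamma>" "2 * t < q \<gamma> x"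
    using dual_point_of_separating_functional[OF assms(1)] by blast
  thus ?thesis using assms(3) by fastforce
qed

abbreviation "\<F> \<equiv> Fx A0 b0 c0 A b c MI"

lemma qgam_eq_qf: "q \<gamma> x = qf (Agam A0 A \<gamma>) (bgam b0 b \<gamma>) (c0 + (\<Sum>k\<in>UNIV. \<gamma>$k * c k)) x"
  by (simp add: qgam_def qf_def inner_Agam inner_bgam sum.distrib distrib_left sum_distrib_left
      algebra_simps)

lemma qgam_along_line:
  "q \<gamma> (x + s *\<^sub>R v) = q \<gamma> x + 2 * s * ((Agam A0 A \<gamma> *v x + bgam b0 b \<gamma>) \<bullet> v)
      + s\<^sup>2 * (v \<bullet> (Agam A0 A \<gamma> *v v))"
  unfolding qgam_eq_qf by (rule qf_along_line[OF symm_Agam])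

lemma affine_functional_qgam: "affine_functional (\<lambda>\<gamma>. q \<gamma> x)"
  unfolding qgam_def by (rule affine_functional_sum)

lemma affine_functional_curvature: "affine_functional (\<lambda>\<gamma>. v \<bullet> (Agam A0 A \<gamma> *v v))"
  unfolding inner_Agam by (rule affine_functional_sum)

lemma affine_functional_slope:
  "affine_functional (\<lambda>\<gamma>. (Agam A0 A \<gamma> *v x + bgam b0 b \<gamma>) \<bullet> v)"
proof -
  have pointwise: "(Agam A0 A \<gamma> *v x + bgam b0 b \<gamma>) \<bullet> v
      = (v \<bullet> (A0 *v x) + b0 \<bullet> v) + (\<Sum>k\<in>UNIV. \<gamma>$k * (v \<bullet> (A k *v x) + b k \<bullet> v))" for \<gamma>
    by (simp add: inner_add_left inner_commute[of "Agam A0 A \<gamma> *v x" v] inner_Agam inner_bgam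
        distrib_left sum.distrib algebra_simps)
  have "(\<lambda>\<gamma>. (Agam A0 A \<gamma> *v x + bgam b0 b \<gamma>) \<bullet> v)
      = (\<lambda>\<gamma>. (v \<bullet> (A0 *v x) + b0 \<bullet> v) + (\<Sum>k\<in>UNIV. \<gamma>$k * (v \<bullet> (A k *v x) + b k \<bullet> v)))"
    by (rule ext) (rule pointwise)
  thus ?thesis by (simp only: affine_functional_sum)
qed

lemma convex_Fx:
  assumes "convex \<Gamma>"
  shows "convex (\<F> x)"
proof -
  obtain w d where wd: "\<And>\<gamma>. q \<gamma> x = w \<bullet> \<gamma> + d"
    using affine_functional_qgam unfolding affine_functional_def by blast
  have "\<F> x = \<Gamma> \<inter> (\<Inter>\<gamma>'\<in>\<Gamma>. {\<gamma>. q \<gamma>' x - d \<le> w \<bullet> \<gamma>})"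
    by (auto simp: Fx_def wd)
  thus ?thesis
    using assms by (simp add: convex_Int convex_INT convex_halfspace_ge)
qed

end

section \<open>Moving along a kernel direction\<close>

locale qcqp_line = qcqp +
  fixes xh v and \<beta> :: real and \<gamma>0 \<gamma>s
  assumes polyhedron_Gamma: "polyhedron (Gamma A0 A MI)"
    and slater: "\<gamma>s \<in> Gamma A0 A MI" "pd (Agam A0 A \<gamma>s)"
    and \<gamma>0_max: "\<gamma>0 \<in> Fx A0 b0 c0 A b c MI xh"
    and kernel: "\<And>\<gamma>. \<gamma> \<in> Fx A0 b0 c0 A b c MI xh \<Longrightarrow> Agam A0 A \<gamma> *v v = 0"
    and slope: "\<And>\<gamma>. \<gamma> \<in> Fx A0 b0 c0 A b c MI xh \<Longrightarrow> bgam b0 b \<gamma> \<bullet> v = \<beta>"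
    and nonzero: "v \<noteq> 0"
begin

text \<open>Moving along \<open>xh + s v\<close> with \<open>t\<close> shifted by \<open>s \<beta>\<close>, the value of every multiplier of the
  maximising face changes exactly like the bound \<open>2 t\<close>; the admissible steps are those for which
  no other multiplier overtakes it.\<close>

definition steps :: "real set" where
  "steps = {s. \<forall>\<gamma>\<in>\<Gamma>. q \<gamma> (xh + s *\<^sub>R v) \<le> q \<gamma>0 xh + 2 * s * \<beta>}"

lemma slope_on_face: "\<gamma> \<in> \<F> xh \<Longrightarrow> (Agam A0 A \<gamma> *v y + bgam b0 b \<gamma>) \<bullet> v = \<beta>"
  using symm_inner[OF symm_Agam, of \<gamma> y v] kernel slope by (simp add: inner_add_left)

lemma value_on_face:
  assumes "\<gamma> \<in> \<F> xh"
  shows "q \<gamma> (xh + s *\<^sub>R v) = q \<gamma>0 xh + 2 * s * \<beta>"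
proof -
  have "q \<gamma> xh = q \<gamma>0 xh" using assms \<gamma>0_max by (auto simp: Fx_def intro: order_antisym)
  thus ?thesis using slope_on_face[OF assms] kernel[OF assms] by (simp add: qgam_along_line)
qed

lemma zero_in_steps: "0 \<in> steps"
  using \<gamma>0_max by (simp add: steps_def Fx_def)

lemma face_subset_Fx_step:
  assumes "s \<in> steps"
  shows "\<F> xh \<subseteq> \<F> (xh + s *\<^sub>R v)"
  using assms value_on_face by (auto simp: steps_def Fx_def)

lemma steps_interior:
  assumes "s \<in> steps" and same: "\<F> (xh + s *\<^sub>R v) = \<F> xh"
  shows "\<exists>\<epsilon>>0. \<forall>e. \<bar>e\<bar> \<le> \<epsilon> \<longrightarrow> s + e \<in> steps"
proof -
  define y where "y = xh + s *\<^sub>R v"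
  define M where "M = q \<gamma>0 xh + 2 * s * \<beta>"
  define p where "p \<gamma> = q \<gamma> y - M" for \<gamma>
  define h where "h \<gamma> = 2 * ((Agam A0 A \<gamma> *v y + bgam b0 b \<gamma>) \<bullet> v) - 2 * \<beta>" for \<gamma>
  have aff: "affine_functional p" "affine_functional h"
    using affine_functional_scale_shift[OF affine_functional_qgam, where r=1 and s="- M"]
      affine_functional_scale_shift[OF affine_functional_slope, where r=2 and s="- 2 * \<beta>"]
    by (simp_all add: p_def[abs_def] h_def[abs_def])
  have p_le: "\<forall>\<gamma>\<in>\<Gamma>. p \<gamma> \<le> 0" using assms(1) by (auto simp: steps_def p_def M_def y_def)
  have "\<gamma>0 \<in> \<Gamma>" "p \<gamma>0 = 0"
    using \<gamma>0_max value_on_face[OF \<gamma>0_max] by (simp_all add: Fx_def p_def M_def y_def)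
  moreover have "h \<gamma> = 0 \<and> v \<bullet> (Agam A0 A \<gamma> *v v) = 0" if "\<gamma> \<in> \<Gamma>" "p \<gamma> = 0" for \<gamma>
  proof -
    have "\<gamma> \<in> \<F> y" using that p_le by (auto simp: Fx_def p_def)
    thus ?thesis using same slope_on_face kernel by (simp add: h_def y_def)
  qed
  ultimately obtain \<epsilon> where "\<epsilon> > 0" and \<epsilon>:
    "\<forall>e. \<bar>e\<bar> \<le> \<epsilon> \<longrightarrow> (\<forall>\<gamma>\<in>\<Gamma>. p \<gamma> + e * h \<gamma> + e\<^sup>2 * (v \<bullet> (Agam A0 A \<gamma> *v v)) \<le> 0)"
    using quadratic_perturbation_nonpos_on_polyhedron[OF polyhedron_Gamma aff
        affine_functional_curvature p_le] by blast
  have shift: "xh + (s + e) *\<^sub>R v = y + e *\<^sub>R v" for e by (simp add: y_def scaleR_add_left)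
  have diff: "q \<gamma> (xh + (s + e) *\<^sub>R v) - (q \<gamma>0 xh + 2 * (s + e) * \<beta>)
      = p \<gamma> + e * h \<gamma> + e\<^sup>2 * (v \<bullet> (Agam A0 A \<gamma> *v v))" for e \<gamma>
    unfolding shift qgam_along_line by (simp add: p_def h_def M_def algebra_simps)
  have "s + e \<in> steps" if "\<bar>e\<bar> \<le> \<epsilon>" for e
    unfolding steps_def mem_Collect_eq
  proof
    fix \<gamma> assume "\<gamma> \<in> \<Gamma>"
    hence "p \<gamma> + e * h \<gamma> + e\<^sup>2 * (v \<bullet> (Agam A0 A \<gamma> *v v)) \<le> 0" using \<epsilon> that by blast
    thus "q \<gamma> (xh + (s + e) *\<^sub>R v) \<le> q \<gamma>0 xh + 2 * (s + e) * \<beta>" using diff[of \<gamma> e] by linarith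
  qed
  thus ?thesis using \<open>\<epsilon> > 0\<close> by blast
qed

lemma compact_steps: "compact steps"
proof -
  define L where "L \<gamma> = (Agam A0 A \<gamma> *v xh + bgam b0 b \<gamma>) \<bullet> v" for \<gamma>
  define Q where "Q \<gamma> = v \<bullet> (Agam A0 A \<gamma> *v v)" for \<gamma>
  have steps_eq: "steps = (\<Inter>\<gamma>\<in>\<Gamma>. {s. q \<gamma> xh + 2 * s * L \<gamma> + s\<^sup>2 * Q \<gamma> \<le> q \<gamma>0 xh + 2 * s * \<beta>})"
    by (auto simp: steps_def qgam_along_line L_def Q_def)
  have "closed steps" unfolding steps_eq
    by (intro closed_INT ballI closed_Collect_le continuous_intros)
  moreover have "Q \<gamma>s > 0" using slater(2) nonzero by (simp add: Q_def pd_def)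
  hence "\<bar>s\<bar> \<le> (\<bar>2 * L \<gamma>s - 2 * \<beta>\<bar> + \<bar>q \<gamma>s xh - q \<gamma>0 xh\<bar>) / Q \<gamma>s + 1" if "s \<in> steps" for s
    using that slater(1) abs_le_of_quadratic_nonpos[of "Q \<gamma>s" "q \<gamma>s xh - q \<gamma>0 xh" s "2 * L \<gamma>s - 2 * \<beta>"]
    unfolding steps_eq by (auto simp: algebra_simps)
  hence "bounded steps" unfolding bounded_real by blast
  ultimately show ?thesis by (simp add: compact_eq_bounded_closed)
qed

lemma D_SDP_step:
  assumes "(xh, th) \<in> \<D>" and "s \<in> steps"
  shows "(xh + s *\<^sub>R v, th + s * \<beta>) \<in> \<D>"
proof (rule strong_duality[OF slater])
  have "q \<gamma>0 xh \<le> 2 * th" using weak_duality[OF assms(1)] \<gamma>0_max by (simp add: Fx_def)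
  thus "\<forall>\<gamma>\<in>\<Gamma>. q \<gamma> (xh + s *\<^sub>R v) \<le> 2 * (th + s * \<beta>)"
    using assms(2) by (fastforce simp: steps_def)
qed

lemma aff_dim_step_gt:
  assumes "\<F> xh face_of \<Gamma>" and "s \<in> steps" and "\<F> (xh + s *\<^sub>R v) \<noteq> \<F> xh"
  shows "aff_dim (\<F> xh) < aff_dim (\<F> (xh + s *\<^sub>R v))"
proof -
  have "\<F> (xh + s *\<^sub>R v) \<subseteq> \<Gamma>" by (auto simp: Fx_def)
  hence "\<F> xh face_of \<F> (xh + s *\<^sub>R v)"
    using face_of_subset[OF assms(1) face_subset_Fx_step[OF assms(2)]] by blast
  thus ?thesis
    using face_of_aff_dim_lt[OF convex_Fx[OF polyhedron_imp_convex[OF polyhedron_Gamma]]] assms(3)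
    by blast
qed

theorem convex_combination_of_larger_faces:
  assumes hat: "(xh, th) \<in> \<D>" and face: "\<F> xh face_of \<Gamma>"
  shows "(xh, th) \<in> convex hull {(y, u) \<in> \<D>. aff_dim (\<F> xh) < aff_dim (\<F> y)}"
    (is "_ \<in> convex hull ?P")
proof -
  have endpoint_in_P: "(xh + s *\<^sub>R v, th + s * \<beta>) \<in> ?P"
    if "s \<in> steps" "\<F> (xh + s *\<^sub>R v) \<noteq> \<F> xh" for s
    using D_SDP_step[OF hat that(1)] aff_dim_step_gt[OF face that] by simp
  obtain smax where smax: "smax \<in> steps" "\<forall>s\<in>steps. s \<le> smax"
    using compact_attains_sup[OF compact_steps] zero_in_steps by blast
  obtain smin where smin: "smin \<in> steps" "\<forall>s\<in>steps. smin \<le> s"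
    using compact_attains_inf[OF compact_steps] zero_in_steps by blast
  obtain \<epsilon> where "\<epsilon> > 0" "\<forall>e. \<bar>e\<bar> \<le> \<epsilon> \<longrightarrow> e \<in> steps"
    using steps_interior[OF zero_in_steps] by auto
  hence "- \<epsilon> \<in> steps" "\<epsilon> \<in> steps" by auto
  hence "smin < 0" "0 < smax" using smin(2) smax(2) \<open>\<epsilon> > 0\<close> by force+
  have "\<F> (xh + smax *\<^sub>R v) \<noteq> \<F> xh"
  proof
    assume "\<F> (xh + smax *\<^sub>R v) = \<F> xh"
    then obtain e where "e > 0" "smax + e \<in> steps" using steps_interior[OF smax(1)] by force
    thus False using smax(2) by force
  qed
  moreover have "\<F> (xh + smin *\<^sub>R v) \<noteq> \<F> xh"
  proof
    assume "\<F> (xh + smin *\<^sub>R v) = \<F> xh"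
    then obtain e where "e > 0" "\<forall>e'. \<bar>e'\<bar> \<le> e \<longrightarrow> smin + e' \<in> steps"
      using steps_interior[OF smin(1)] by blast
    hence "e > 0" "smin + - e \<in> steps" by (metis abs_minus_cancel abs_of_pos order_refl)+
    thus False using smin(2) by force
  qed
  ultimately have ends:
    "(xh + smin *\<^sub>R v, th + smin * \<beta>) \<in> ?P" "(xh + smax *\<^sub>R v, th + smax * \<beta>) \<in> ?P"
    using endpoint_in_P smin(1) smax(1) by blast+
  define u where "u = - smin / (smax - smin)"
  have u: "0 \<le> u" "u \<le> 1" "(1 - u) * smin + u * smax = 0"
    using \<open>smin < 0\<close> \<open>0 < smax\<close> by (auto simp: u_def field_simps)
  have "(1 - u) *\<^sub>R (xh + smin *\<^sub>R v, th + smin * \<beta>) + u *\<^sub>R (xh + smax *\<^sub>R v, th + smax * \<beta>)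
      = (xh + ((1 - u) * smin + u * smax) *\<^sub>R v, th + ((1 - u) * smin + u * smax) * \<beta>)"
    by (simp add: algebra_simps)
  also have "\<dots> = (xh, th)" using u(3) by simp
  finally show ?thesis
    using convexD_alt[OF convex_convex_hull hull_inc[OF ends(1)] hull_inc[OF ends(2)] u(1,2)] by simp
qed

end

theorem mainTheorem6:
  fixes A0 :: "real^'n^'n" and b0 :: "real^'n" and c0 :: real
    and A :: "'m::finite \<Rightarrow> real^'n^'n" and b :: "'m \<Rightarrow> real^'n" and c :: "'m \<Rightarrow> real"
    and MI :: "'m set" and xh :: "real^'n" and th :: real
  assumes symA0: "symm A0" and symA: "\<forall>i. symm (A i)"
    and A_feas: "\<exists>x. (\<forall>i\<in>MI. qf (A i) (b i) (c i) x \<le> 0) \<and> (\<forall>i\<in>- MI. qf (A i) (b i) (c i) x = 0)"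
    and A_slater: "\<exists>\<gamma>. (\<forall>i\<in>MI. 0 \<le> \<gamma>$i) \<and> pd (Agam A0 A \<gamma>)"
    and C_poly: "polyhedron (Gamma A0 A MI)"
    and dimcond: "\<forall>F. semidef_face A0 A MI F \<longrightarrow>
        int (dim (Vker A0 A F)) \<ge> aff_dim (bgam b0 b ` F) + 1"
    and hat_in: "(xh, th) \<in> D_SDP A0 b0 c0 A b c MI"
    and hat_semidef: "semidef_face A0 A MI (Fx A0 b0 c0 A b c MI xh)"
  shows "(xh, th) \<in> convex hull {(x, t) \<in> D_SDP A0 b0 c0 A b c MI.
            aff_dim (Fx A0 b0 c0 A b c MI x) > aff_dim (Fx A0 b0 c0 A b c MI xh)}"
proof -
  interpret qcqp A0 b0 c0 A b c MI using symA0 symA by unfold_locales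
  obtain \<gamma>s where \<gamma>s: "\<gamma>s \<in> \<Gamma>" "pd (Agam A0 A \<gamma>s)"
    using A_slater pd_imp_psd by (auto simp: Gamma_def)
  have face: "\<F> xh face_of \<Gamma>" and "\<F> xh \<noteq> {}" using hat_semidef by (simp_all add: semidef_face_def)
  then obtain \<gamma>0 where \<gamma>0: "\<gamma>0 \<in> \<F> xh" by blast
  have "aff_dim (bgam b0 b ` \<F> xh) + 1 \<le> int (dim (Vker A0 A (\<F> xh)))"
    using dimcond hat_semidef by blast
  then obtain v where v: "v \<in> Vker A0 A (\<F> xh)" "v \<noteq> 0"
    and b_const: "\<forall>y\<in>bgam b0 b ` \<F> xh. y \<bullet> v = bgam b0 b \<gamma>0 \<bullet> v"
    using exists_direction_in_subspace_orthogonal_to_affine_set[OF subspace_Vker imageI[OF \<gamma>0]]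
    by blast
  have "\<And>\<gamma>. \<gamma> \<in> \<F> xh \<Longrightarrow> Agam A0 A \<gamma> *v v = 0" using v(1) by (simp add: Vker_def)
  moreover have "\<And>\<gamma>. \<gamma> \<in> \<F> xh \<Longrightarrow> bgam b0 b \<gamma> \<bullet> v = bgam b0 b \<gamma>0 \<bullet> v" using b_const by blast
  ultimately interpret qcqp_line A0 b0 c0 A b c MI xh v "bgam b0 b \<gamma>0 \<bullet> v" \<gamma>0 \<gamma>s
    using C_poly \<gamma>s \<gamma>0 v(2) by unfold_locales
  show ?thesis using convex_combination_of_larger_faces[OF hat_in face] by simp
qed

end
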